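(* Let $\phi$ be a smooth nonnegative function on $\mathbb{R}^d$ such that for some $r>0$, $R>0$: $\phi(x)>0$ for $|x|\le r$ and $\phi(x)=0$ for $|x|\ge R$. Let $\Phi$ be smooth with $\Phi\to+\infty$ at infinity, and let $f\ge0$ be a smooth (sufficiently decaying) solution of $$f_t+v\cdot\nabla_xf-\operatorname{div}_v(f\nabla_x\Phi)+\operatorname{div}_v\big(f(\tilde u-v)\big)=0.$$ Let $\mathcal E(t)=\int_{\mathbb{R}^{2d}}(\frac{|v|^2}2+\Phi(x))f(x,v,t)\,dx\,dv$. Then there is a constant $C$ depending only on $\phi$, of order $\frac{\sup_{B_R(0)}\phi}{\inf_{B_r(0)}\phi}\left(\frac Rr\right)^d$, such that $\mathcal E(t)\le\mathcal E(0)e^{Ct}$ for all $t\ge0$.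
   Context: $\rho=\int f\,dv$, $j=\int vf\,dv$; $\tilde\rho=\phi\star\rho=\int\phi(x-y)\rho(y)\,dy$ and $\tilde u=\frac{\int\phi(x-y)j(y)\,dy}{\tilde\rho}$ where $\tilde\rho\ne0$ ($\tilde u=0$ elsewhere). *)

theory Defs
  imports "HOL-Analysis.Analysis"
begin

definition dir_deriv :: "('a::real_normed_vector \<Rightarrow> real) \<Rightarrow> 'a \<Rightarrow> 'a \<Rightarrow> real" where
  "dir_deriv g x e = deriv (\<lambda>s. g (x + s *\<^sub>R e)) 0"

text \<open>Iterated directional derivatives (innermost direction last in the list).\<close>
fun iter_dir_deriv :: "'a::real_normed_vector list \<Rightarrow> ('a \<Rightarrow> real) \<Rightarrow> 'a \<Rightarrow> real" where
  "iter_dir_deriv [] g = g"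
| "iter_dir_deriv (e # es) g = (\<lambda>x. dir_deriv (iter_dir_deriv es g) x e)"

definition smooth_fun :: "('a::euclidean_space \<Rightarrow> real) \<Rightarrow> bool" where
  "smooth_fun g \<longleftrightarrow>
     (\<forall>es. set es \<subseteq> Basis \<longrightarrow>
        continuous_on UNIV (iter_dir_deriv es g) \<and>
        (\<forall>e\<in>Basis. \<forall>x. (\<lambda>s. iter_dir_deriv es g (x + s *\<^sub>R e)) differentiable (at 0)))"

definition grad_d :: "(real^'d \<Rightarrow> real) \<Rightarrow> real^'d \<Rightarrow> real^'d" where
  "grad_d g x = (\<chi> i. dir_deriv g x (axis i 1))"

definition div_d :: "(real^'d \<Rightarrow> real^'d) \<Rightarrow> real^'d \<Rightarrow> real" where
  "div_d F x = (\<Sum>i\<in>UNIV. dir_deriv (\<lambda>y. F y $ i) x (axis i 1))"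

definition rho :: "(real^'d \<Rightarrow> real^'d \<Rightarrow> real \<Rightarrow> real) \<Rightarrow> real^'d \<Rightarrow> real \<Rightarrow> real" where
  "rho f x t = (LINT v|lborel. f x v t)"

definition jflux :: "(real^'d \<Rightarrow> real^'d \<Rightarrow> real \<Rightarrow> real) \<Rightarrow> real^'d \<Rightarrow> real \<Rightarrow> real^'d" where
  "jflux f x t = (LINT v|lborel. f x v t *\<^sub>R v)"

definition rho_tilde :: "(real^'d \<Rightarrow> real) \<Rightarrow> (real^'d \<Rightarrow> real^'d \<Rightarrow> real \<Rightarrow> real) \<Rightarrow> real^'d \<Rightarrow> real \<Rightarrow> real" where
  "rho_tilde \<phi> f x t = (LINT y|lborel. \<phi> (x - y) * rho f y t)"

definition u_tilde :: "(real^'d \<Rightarrow> real) \<Rightarrow> (real^'d \<Rightarrow> real^'d \<Rightarrow> real \<Rightarrow> real) \<Rightarrow> real^'d \<Rightarrow> real \<Rightarrow> real^'d" where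
  "u_tilde \<phi> f x t =
     (if rho_tilde \<phi> f x t \<noteq> 0
      then (1 / rho_tilde \<phi> f x t) *\<^sub>R (LINT y|lborel. \<phi> (x - y) *\<^sub>R jflux f y t)
      else 0)"

definition energy :: "(real^'d \<Rightarrow> real) \<Rightarrow> (real^'d \<Rightarrow> real^'d \<Rightarrow> real \<Rightarrow> real) \<Rightarrow> real \<Rightarrow> real" where
  "energy \<Phi> f t = (LINT z|lborel. (norm (snd z) ^ 2 / 2 + \<Phi> (fst z)) * f (fst z) (snd z) t)"

definition kinetic_eq :: "(real^'d \<Rightarrow> real) \<Rightarrow> (real^'d \<Rightarrow> real) \<Rightarrow> (real^'d \<Rightarrow> real^'d \<Rightarrow> real \<Rightarrow> real) \<Rightarrow> bool" where
  "kinetic_eq \<phi> \<Phi> f \<longleftrightarrow>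
     (\<forall>x v t. t \<ge> 0 \<longrightarrow>
        deriv (\<lambda>s. f x v s) t
        + v \<bullet> grad_d (\<lambda>y. f y v t) x
        - div_d (\<lambda>w. f x w t *\<^sub>R grad_d \<Phi> x) v
        + div_d (\<lambda>w. f x w t *\<^sub>R (u_tilde \<phi> f x t - w)) v = 0)"

end

theory Submission
  imports Defs
begin

(* Let H(x,v) = |v|^2/2 + Phi(x), so that E(t) = \<integral>\<integral> H f.  For a compactly supported
   classical solution, E is differentiable with E' = \<integral>\<integral> H f_t.  Substituting the kinetic
   equation, the transport terms H (-v.grad_x f + grad Phi.grad_v f) are exact derivatives
   and integrate to zero, while one integration by parts in v turns the alignment term into
       E'(t) = \<integral>\<integral> (v.u~ - |v|^2) f  \<le>  (1/2) \<integral> rho |u~|^2 - (1/2) \<integral> e,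
   where e(x) = \<integral> |v|^2 f dv.  By Cauchy-Schwarz, rho |u~|^2 \<le> (rho / rho~) (phi * e).
   A covering argument with balls of radius r/2 shows that rho / rho~ has integral at most
   ((2R + r)/r)^d / inf phi over every ball of radius R, whence
       \<integral> (rho / rho~) (phi * e) \<le> C \<integral> e,   C = sup phi ((2R + r)/r)^d / inf phi.
   Since \<integral> e \<le> 2 E, this gives E' \<le> C E, and Gronwall's inequality together with
   C \<le> 3^d (sup phi / inf phi) (R/r)^d proves the theorem. *)

lemma abs_diff_le_deriv_bound:
  fixes f f' :: "real \<Rightarrow> real"
  assumes D: "\<And>t. min a b \<le> t \<Longrightarrow> t \<le> max a b \<Longrightarrow> (f has_real_derivative f' t) (at t)"
    and B: "\<And>t. min a b \<le> t \<Longrightarrow> t \<le> max a b \<Longrightarrow> \<bar>f' t\<bar> \<le> M"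
  shows "\<bar>f b - f a\<bar> \<le> M * \<bar>b - a\<bar>"
proof (cases a b rule: linorder_cases)
  case less
  then obtain z where z: "a < z" "z < b" "f b - f a = (b - a) * f' z"
    using MVT2[of a b f f'] D by auto
  then have "\<bar>f b - f a\<bar> = \<bar>b - a\<bar> * \<bar>f' z\<bar>" by (simp add: abs_mult)
  also have "\<dots> \<le> \<bar>b - a\<bar> * M" using B[of z] z less by (intro mult_left_mono) auto
  finally show ?thesis by (simp add: mult.commute)
next
  case equal then show ?thesis by simp
next
  case greater
  then obtain z where z: "b < z" "z < a" "f a - f b = (a - b) * f' z"
    using MVT2[of b a f f'] D by auto
  then have "\<bar>f b - f a\<bar> = \<bar>b - a\<bar> * \<bar>f' z\<bar>" by (simp add: abs_mult abs_minus_commute)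
  also have "\<dots> \<le> \<bar>b - a\<bar> * M" using B[of z] z greater by (intro mult_left_mono) auto
  finally show ?thesis by (simp add: mult.commute)
qed

lemma integrable_vanishing_outside_ball:
  fixes g :: "'a::euclidean_space \<Rightarrow> 'b::{banach,second_countable_topology}"
  assumes "continuous_on UNIV g" "\<And>z. norm z > R \<Longrightarrow> g z = 0"
  shows "integrable lborel g"
proof -
  have "integrable lborel (\<lambda>x. indicator (cball 0 R) x *\<^sub>R g x)"
    by (rule borel_integrable_compact) (auto intro: continuous_on_subset[OF assms(1)])
  also have "(\<lambda>x. indicator (cball 0 R) x *\<^sub>R g x) = g"
    using assms(2) by (auto simp: indicator_def fun_eq_iff not_le)
  finally show ?thesis .
qed

lemma integrable_indicator_cball:
  "integrable lborel (\<lambda>z::'a::euclidean_space. M * indicator (cball 0 R) z :: real)"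
  by (intro integrable_mult_right integrable_real_indicator emeasure_bounded_finite) auto

lemma continuous_bounded_on_cball:
  fixes g :: "'a::euclidean_space \<Rightarrow> 'b::real_normed_vector"
  assumes "continuous_on UNIV g"
  shows "\<exists>M. \<forall>z. norm z \<le> R \<longrightarrow> norm (g z) \<le> M"
proof -
  have "compact (g ` cball 0 R)"
    by (intro compact_continuous_image continuous_on_subset[OF assms]) auto
  then obtain M where "\<forall>x\<in>g ` cball 0 R. norm x \<le> M"
    using compact_imp_bounded bounded_iff by metis
  then show ?thesis by (intro exI[of _ M]) auto
qed

lemma integral_difference_quotients_tendsto:
  fixes h h' :: "real \<Rightarrow> 'a::euclidean_space \<Rightarrow> real"
  assumes D: "\<And>s z. \<bar>s - a\<bar> < \<delta> \<Longrightarrow> ((\<lambda>s. h s z) has_real_derivative h' s z) (at s)"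
    and M: "\<And>s. \<bar>s - a\<bar> < \<delta> \<Longrightarrow> h s \<in> borel_measurable lborel"
    and M': "h' a \<in> borel_measurable lborel"
    and I: "\<And>s. \<bar>s - a\<bar> < \<delta> \<Longrightarrow> integrable lborel (h s)"
    and S: "\<And>s z. \<bar>s - a\<bar> < \<delta> \<Longrightarrow> norm z > K \<Longrightarrow> h s z = 0"
    and B: "\<And>s z. \<bar>s - a\<bar> < \<delta> \<Longrightarrow> norm z \<le> K \<Longrightarrow> \<bar>h' s z\<bar> \<le> Mb"
    and Y: "\<And>n. Y n \<noteq> a" "\<And>n. \<bar>Y n - a\<bar> < \<delta>" "Y \<longlonglongrightarrow> a"
  shows "(\<lambda>n. ((\<integral>z. h (Y n) z \<partial>lborel) - (\<integral>z. h a z \<partial>lborel)) / (Y n - a))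
           \<longlonglongrightarrow> (\<integral>z. h' a z \<partial>lborel)"
    and "integrable lborel (h' a)"
proof -
  have \<delta>: "\<delta> > 0" using Y(2)[of 0] by linarith
  define q where "q = (\<lambda>n z. (h (Y n) z - h a z) / (Y n - a))"
  have lim: "(\<lambda>n. q n z) \<longlonglongrightarrow> h' a z" for z
  proof -
    have "((\<lambda>y. (h y z - h a z) / (y - a)) \<longlongrightarrow> h' a z) (at a)"
      using D[of a z] \<delta> by (simp add: has_field_derivative_iff)
    then show ?thesis using Y unfolding tendsto_at_iff_sequentially q_def by (auto simp: o_def)
  qed
  have bnd: "norm (q n z) \<le> Mb * indicator (cball 0 K) z" for n z
  proof (cases "norm z \<le> K")
    case True
    have "\<bar>h (Y n) z - h a z\<bar> \<le> Mb * \<bar>Y n - a\<bar>"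
    proof (rule abs_diff_le_deriv_bound[where f'="\<lambda>s. h' s z"])
      fix t assume "min a (Y n) \<le> t" "t \<le> max a (Y n)"
      then have "\<bar>t - a\<bar> < \<delta>" using Y(2)[of n] by (auto simp: abs_if split: if_splits)
      then show "((\<lambda>s. h s z) has_real_derivative h' t z) (at t)" "\<bar>h' t z\<bar> \<le> Mb"
        using D B True by auto
    qed
    then show ?thesis using True Y(1)[of n]
      by (simp add: q_def abs_divide divide_le_eq mem_cball)
  next
    case False
    then show ?thesis using S[of "Y n" z] S[of a z] Y(2)[of n] \<delta> by (simp add: q_def)
  qed
  have qm: "q n \<in> borel_measurable lborel" for n
  proof -
    have [measurable]: "h (Y n) \<in> borel_measurable lborel" "h a \<in> borel_measurable lborel"
      using M[of "Y n"] M[of a] Y(2)[of n] \<delta> by auto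
    show ?thesis unfolding q_def by measurable
  qed
  have "integral\<^sup>L lborel (q n) = ((\<integral>z. h (Y n) z \<partial>lborel) - (\<integral>z. h a z \<partial>lborel)) / (Y n - a)" for n
    unfolding q_def using I[of "Y n"] I[of a] Y(2)[of n] \<delta> by (simp add: integral_diff)
  moreover have "(\<lambda>n. integral\<^sup>L lborel (q n)) \<longlonglongrightarrow> (\<integral>z. h' a z \<partial>lborel)"
    by (rule integral_dominated_convergence[where s=q, OF M' qm integrable_indicator_cball]) (use lim bnd in auto)
  ultimately show "(\<lambda>n. ((\<integral>z. h (Y n) z \<partial>lborel) - (\<integral>z. h a z \<partial>lborel)) / (Y n - a))
           \<longlonglongrightarrow> (\<integral>z. h' a z \<partial>lborel)" by simp
  show "integrable lborel (h' a)"
    by (rule integrable_dominated_convergence[where s=q, OF M' qm integrable_indicator_cball]) (use lim bnd in auto)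
qed

lemma has_real_derivative_integral:
  fixes h h' :: "real \<Rightarrow> 'a::euclidean_space \<Rightarrow> real"
  assumes "\<delta> > 0"
    and D: "\<And>s z. \<bar>s - a\<bar> < \<delta> \<Longrightarrow> ((\<lambda>s. h s z) has_real_derivative h' s z) (at s)"
    and M: "\<And>s. \<bar>s - a\<bar> < \<delta> \<Longrightarrow> h s \<in> borel_measurable lborel"
    and M': "h' a \<in> borel_measurable lborel"
    and I: "\<And>s. \<bar>s - a\<bar> < \<delta> \<Longrightarrow> integrable lborel (h s)"
    and S: "\<And>s z. \<bar>s - a\<bar> < \<delta> \<Longrightarrow> norm z > K \<Longrightarrow> h s z = 0"
    and B: "\<And>s z. \<bar>s - a\<bar> < \<delta> \<Longrightarrow> norm z \<le> K \<Longrightarrow> \<bar>h' s z\<bar> \<le> Mb"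
  shows "((\<lambda>s. \<integral>z. h s z \<partial>lborel) has_real_derivative (\<integral>z. h' a z \<partial>lborel)) (at a)"
    and "integrable lborel (h' a)"
proof -
  note quotients = integral_difference_quotients_tendsto[OF D M M' I S B]
  define F where "F = (\<lambda>s. \<integral>z. h s z \<partial>lborel)"
  define Y0 where "Y0 = (\<lambda>n. a + (\<delta> / 2) * inverse (real (Suc n)))"
  have "Y0 \<longlonglongrightarrow> a"
    unfolding Y0_def using tendsto_add[OF tendsto_const[of a]
        tendsto_mult[OF tendsto_const[of "\<delta>/2"] LIMSEQ_inverse_real_of_nat]] by simp
  moreover have "\<bar>Y0 n - a\<bar> < \<delta>" for n
  proof -
    have "\<bar>Y0 n - a\<bar> = (\<delta>/2) * inverse (real (Suc n))" using \<open>\<delta> > 0\<close> by (simp add: Y0_def abs_mult)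
    also have "\<dots> \<le> \<delta>/2" using \<open>\<delta> > 0\<close> by (intro mult_left_le) (auto simp: inverse_le_1_iff)
    finally show ?thesis using \<open>\<delta> > 0\<close> by simp
  qed
  moreover have "Y0 n \<noteq> a" for n using \<open>\<delta> > 0\<close> by (simp add: Y0_def)
  ultimately show "integrable lborel (h' a)" using quotients(2) by blast
  have "((\<lambda>y. (F y - F a) / (y - a)) \<longlongrightarrow> (\<integral>z. h' a z \<partial>lborel)) (at a)"
    unfolding tendsto_at_iff_sequentially
  proof (intro allI impI)
    fix X :: "nat \<Rightarrow> real" assume X: "\<forall>i. X i \<in> UNIV - {a}" "X \<longlonglongrightarrow> a"
    obtain N where N: "\<And>n. n \<ge> N \<Longrightarrow> \<bar>X n - a\<bar> < \<delta>"
      using X(2) \<open>\<delta> > 0\<close> unfolding LIMSEQ_iff by (metis real_norm_def)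
    have "(\<lambda>n. (F (X (n + N)) - F a) / (X (n + N) - a)) \<longlonglongrightarrow> (\<integral>z. h' a z \<partial>lborel)"
      unfolding F_def
      by (rule quotients(1)) (use X(1) N LIMSEQ_ignore_initial_segment[OF X(2), of N] in auto)
    then show "((\<lambda>y. (F y - F a) / (y - a)) \<circ> X) \<longlonglongrightarrow> (\<integral>z. h' a z \<partial>lborel)"
      unfolding comp_def by (rule LIMSEQ_offset[where k=N])
  qed
  then show "((\<lambda>s. \<integral>z. h s z \<partial>lborel) has_real_derivative (\<integral>z. h' a z \<partial>lborel)) (at a)"
    unfolding F_def has_field_derivative_iff by simp
qed

lemma lborel_integral_translate:
  fixes G :: "'a::euclidean_space \<Rightarrow> real"
  assumes "G \<in> borel_measurable borel"
  shows "(\<integral>z. G (z + c) \<partial>lborel) = (\<integral>z. G z \<partial>lborel)"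
proof -
  have "(\<integral>z. G z \<partial>lborel) = (\<integral>z. G z \<partial>(distr lborel borel ((+) c)))"
    by (simp add: lborel_distr_plus)
  also have "\<dots> = (\<integral>z. G (c + z) \<partial>lborel)"
    by (rule integral_distr) (auto simp: assms)
  finally show ?thesis by (simp add: add.commute)
qed

text \<open>Indeed the integral of the
  translate G(. + s w) does not depend on s, and its s-derivative is the integral of D.\<close>
lemma integral_directional_derivative_eq_0:
  fixes G D :: "'a::euclidean_space \<Rightarrow> real"
  assumes cG: "continuous_on UNIV G" and cD: "continuous_on UNIV D"
    and dG: "\<And>z s. ((\<lambda>s. G (z + s *\<^sub>R w)) has_real_derivative D (z + s *\<^sub>R w)) (at s)"
    and sG: "\<And>z. norm z > K \<Longrightarrow> G z = 0"
  shows "integrable lborel D" "(\<integral>z. D z \<partial>lborel) = 0"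
proof -
  obtain Mb where Mb: "\<And>z. norm z \<le> K + 2 * norm w \<Longrightarrow> norm (D z) \<le> Mb"
    using continuous_bounded_on_cball[OF cD, of "K + 2 * norm w"] by auto
  have cGs: "continuous_on UNIV (\<lambda>z. G (z + s *\<^sub>R w))" for s
    by (intro continuous_on_compose2[OF cG]) (auto intro!: continuous_intros)
  have shift_small: "norm (s *\<^sub>R w) \<le> norm w" if "\<bar>s - 0\<bar> < 1" for s :: real
    using that by (auto intro!: mult_left_le_one_le)
  have vanish: "G (z + s *\<^sub>R w) = 0" if "\<bar>s - 0\<bar> < 1" "norm z > K + norm w" for s z
    using sG shift_small[OF that(1)] that(2) norm_triangle_ineq2[of z "- s *\<^sub>R w"] by auto
  have bound: "\<bar>D (z + s *\<^sub>R w)\<bar> \<le> Mb" if "\<bar>s - 0\<bar> < 1" "norm z \<le> K + norm w" for s z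
    using Mb shift_small[OF that(1)] that(2) norm_triangle_ineq[of z "s *\<^sub>R w"] by fastforce
  have mG: "(\<lambda>z. G (z + s *\<^sub>R w)) \<in> borel_measurable lborel" for s
    using cGs by (simp add: borel_measurable_continuous_onI)
  have mD: "(\<lambda>z. D (z + 0 *\<^sub>R w)) \<in> borel_measurable lborel"
    using cD by (simp add: borel_measurable_continuous_onI)
  have iG: "integrable lborel (\<lambda>z. G (z + s *\<^sub>R w))" if "\<bar>s - 0\<bar> < 1" for s
    by (rule integrable_vanishing_outside_ball[OF cGs]) (rule vanish[OF that])
  note L = has_real_derivative_integral[where h="\<lambda>s z. G (z + s *\<^sub>R w)"
      and h'="\<lambda>s z. D (z + s *\<^sub>R w)" and a=0 and \<delta>=1 and K="K + norm w",
      OF _ dG mG mD iG vanish bound]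
  show "integrable lborel D" using L(2) by simp
  have "(\<lambda>s. \<integral>z. G (z + s *\<^sub>R w) \<partial>lborel) = (\<lambda>s. \<integral>z. G z \<partial>lborel)"
    using lborel_integral_translate borel_measurable_continuous_onI[OF cG] by auto
  then have "((\<lambda>s. \<integral>z. G z \<partial>lborel) has_real_derivative (\<integral>z. D z \<partial>lborel)) (at 0)"
    using L(1) by simp
  then show "(\<integral>z. D z \<partial>lborel) = 0"
    using DERIV_const DERIV_unique by blast
qed

lemma continuous_on_parametric_integral:
  fixes g :: "'a::euclidean_space \<times> 'b::euclidean_space \<Rightarrow> 'c::{banach,second_countable_topology}"
  assumes S: "closed S" and cg: "continuous_on (S \<times> UNIV) g"
    and sg: "\<And>y v. y \<in> S \<Longrightarrow> norm v > B \<Longrightarrow> g (y,v) = 0"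
  shows "continuous_on S (\<lambda>y. \<integral>v. g (y,v) \<partial>lborel)"
proof (rule continuous_on_sequentiallyI)
  fix u a assume u: "\<forall>n. u n \<in> S" "a \<in> S" "u \<longlonglongrightarrow> a"
  define C where "C = (S \<inter> cball a 1) \<times> cball (0::'b) B"
  have "compact C" unfolding C_def using S by (intro compact_Times closed_Int_compact) auto
  moreover have "continuous_on C g" by (rule continuous_on_subset[OF cg]) (auto simp: C_def)
  ultimately have "compact (g ` C)" by (rule compact_continuous_image[rotated])
  then obtain M where M: "\<And>p. p \<in> C \<Longrightarrow> norm (g p) \<le> M"
    using compact_imp_bounded bounded_iff by (metis imageI)
  obtain N where N: "\<And>n. n \<ge> N \<Longrightarrow> dist (u n) a < 1"
    using u(3) unfolding LIMSEQ_def by (meson zero_less_one)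
  define w where "w = (\<lambda>n. u (n + N))"
  have wS: "w n \<in> S" for n using u by (simp add: w_def)
  have wlim: "w \<longlonglongrightarrow> a" unfolding w_def by (rule LIMSEQ_ignore_initial_segment[OF u(3)])
  have cy: "continuous_on UNIV (\<lambda>v. g (y, v))" if "y \<in> S" for y
    by (rule continuous_on_compose2[OF cg]) (use that in \<open>auto intro!: continuous_intros\<close>)
  have dominated: "norm (g (w n, v)) \<le> M * indicator (cball 0 B) v" for n v
  proof (cases "norm v \<le> B")
    case True
    have "(w n, v) \<in> C" using True wS[of n] N[of "n + N"] by (auto simp: C_def w_def dist_commute)
    then show ?thesis using M True by auto
  next
    case False then show ?thesis using sg[OF wS[of n], of v] by auto
  qed
  have pointwise: "(\<lambda>n. g (w n, v)) \<longlonglongrightarrow> g (a, v)" for v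
  proof -
    have "((\<lambda>n. (w n, v)) \<longlongrightarrow> (a, v)) sequentially" by (intro tendsto_Pair wlim tendsto_const)
    then show ?thesis by (rule continuous_on_tendsto_compose[OF cg]) (use u(2) wS in auto)
  qed
  have "(\<lambda>n. \<integral>v. g (w n, v) \<partial>lborel) \<longlonglongrightarrow> (\<integral>v. g (a, v) \<partial>lborel)"
  proof (rule integral_dominated_convergence[where s="\<lambda>n v. g (w n, v)" and
        w="\<lambda>v. M * indicator (cball 0 B) v"])
    show "(\<lambda>v. g (a, v)) \<in> borel_measurable lborel"
      using cy[OF u(2)] by (simp add: borel_measurable_continuous_onI)
    show "(\<lambda>v. g (w n, v)) \<in> borel_measurable lborel" for n
      using cy[OF wS] by (simp add: borel_measurable_continuous_onI)
    show "integrable lborel (\<lambda>v. M * indicator (cball 0 B) v)"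
      by (rule integrable_indicator_cball)
  qed (use pointwise dominated in simp_all)
  then show "(\<lambda>n. \<integral>v. g (u n, v) \<partial>lborel) \<longlonglongrightarrow> (\<integral>v. g (a, v) \<partial>lborel)"
    unfolding w_def by (rule LIMSEQ_offset[where k=N])
qed

lemma gronwall_deriv:
  fixes E :: "real \<Rightarrow> real"
  assumes t: "t \<ge> 0" and c: "continuous_on {0..t} E"
    and d: "\<And>s. 0 < s \<Longrightarrow> s < t \<Longrightarrow> \<exists>D. (E has_real_derivative D) (at s) \<and> D \<le> A * E s"
  shows "E t \<le> E 0 * exp (A * t)"
proof -
  define g where "g = (\<lambda>s. E s * exp (- A * s))"
  have "g 0 \<ge> g t"
  proof (rule DERIV_nonpos_imp_decreasing_open[OF t])
    fix s assume s: "0 < s" "s < t"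
    obtain D where D: "(E has_real_derivative D) (at s)" "D \<le> A * E s" using d[OF s] by blast
    have "(g has_real_derivative (D * exp (- A * s) + E s * (- A * exp (- A * s)))) (at s)"
      unfolding g_def by (auto intro!: derivative_eq_intros D(1))
    moreover have "D * exp (- A * s) + E s * (- A * exp (- A * s)) = (D - A * E s) * exp (- A * s)"
      by (simp add: algebra_simps)
    moreover have "(D - A * E s) * exp (- A * s) \<le> 0"
      using D(2) by (intro mult_nonpos_nonneg) auto
    ultimately show "\<exists>y. (g has_real_derivative y) (at s) \<and> y \<le> 0" by metis
  next
    show "continuous_on {0..t} g" unfolding g_def by (intro continuous_intros c)
  qed
  then have "E t * exp (- A * t) \<le> E 0" by (simp add: g_def)
  then have "E t * exp (- A * t) * exp (A * t) \<le> E 0 * exp (A * t)" by (intro mult_right_mono) auto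
  then show ?thesis by (simp add: exp_minus field_simps)
qed

lemma inner_le_half_sum_squares: "v \<bullet> U \<le> (norm v ^ 2 + norm U ^ 2) / 2"
  for v U :: "'a::real_inner"
proof -
  have "0 \<le> norm (v - U) ^ 2" by simp
  also have "norm (v - U) ^ 2 = norm v ^ 2 - 2 * (v \<bullet> U) + norm U ^ 2"
    by (simp add: power2_norm_eq_inner inner_diff_left inner_diff_right inner_commute)
  finally show ?thesis by simp
qed

lemma square_le_of_quadratic_nonneg:
  fixes a b m :: real
  assumes "\<And>l. 0 \<le> b - 2 * l * a + l^2 * m" and "m > 0"
  shows "a^2 \<le> m * b"
proof -
  have "0 \<le> b - 2 * (a/m) * a + (a/m)^2 * m" by (rule assms(1))
  also have "\<dots> = b - a^2 / m" using assms(2) by (simp add: field_simps power2_eq_square)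
  finally show ?thesis using assms(2) by (simp add: field_simps)
qed

lemma smooth_fun_continuous: "smooth_fun g \<Longrightarrow> continuous_on UNIV g"
  unfolding smooth_fun_def by (metis empty_subsetI iter_dir_deriv.simps(1) list.set(1))

lemma smooth_fun_partial_continuous:
  "smooth_fun g \<Longrightarrow> e \<in> Basis \<Longrightarrow> continuous_on UNIV (iter_dir_deriv [e] g)"
  unfolding smooth_fun_def by (metis empty_subsetI insert_subset list.set(1) list.set(2))

lemma smooth_fun_has_partial_derivative:
  assumes "smooth_fun g" "e \<in> Basis"
  shows "((\<lambda>s. g (p + s *\<^sub>R e)) has_real_derivative iter_dir_deriv [e] g (p + s *\<^sub>R e)) (at s)"
proof -
  let ?q = "p + s *\<^sub>R e"
  have "(\<lambda>\<sigma>. iter_dir_deriv [] g (?q + \<sigma> *\<^sub>R e)) differentiable (at 0)"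
    using assms unfolding smooth_fun_def by (metis empty_subsetI list.set(1))
  then have "((\<lambda>\<sigma>. g (?q + \<sigma> *\<^sub>R e)) has_real_derivative dir_deriv g ?q e) (at 0)"
    unfolding dir_deriv_def by (simp add: DERIV_deriv_iff_real_differentiable)
  then have "((\<lambda>\<sigma>. g (p + (\<sigma> + s) *\<^sub>R e)) has_real_derivative dir_deriv g ?q e) (at 0)"
    by (simp add: algebra_simps scaleR_add_left)
  then show ?thesis using DERIV_shift[of "\<lambda>\<sigma>. g (p + \<sigma> *\<^sub>R e)" _ 0 s] by simp
qed

lemma dir_deriv_eqI:
  "((\<lambda>s. g (x + s *\<^sub>R e)) has_real_derivative D) (at 0) \<Longrightarrow> dir_deriv g x e = D"
  unfolding dir_deriv_def by (rule DERIV_imp_deriv)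

lemma norm_add_axis_sq:
  "norm (v + s *\<^sub>R axis i 1) ^ 2 = norm v ^ 2 + 2 * s * v $ i + s ^ 2" for v :: "real^'d"
  by (simp add: power2_norm_eq_inner inner_add_left inner_add_right inner_axis inner_commute)
     (simp add: inner_axis_axis algebra_simps power2_eq_square)

definition box_supported :: "real \<Rightarrow> ('a::euclidean_space \<times> 'b::euclidean_space \<Rightarrow>
    'c::{banach,second_countable_topology}) \<Rightarrow> bool" where
  "box_supported B g \<longleftrightarrow>
     continuous_on UNIV g \<and> (\<forall>y v. (norm y > B \<or> norm v > B) \<longrightarrow> g (y,v) = 0)"

lemma norm_Pair_gt_imp: "norm z > 2 * B \<Longrightarrow> norm (fst z) > B \<or> norm (snd z) > B"
  for z :: "'a::real_normed_vector \<times> 'b::real_normed_vector"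
  using norm_Pair_le[of "fst z" "snd z"] by auto

lemma box_supported_vanishing: "box_supported B g \<Longrightarrow> norm z > 2 * B \<Longrightarrow> g z = 0"
  unfolding box_supported_def using norm_Pair_gt_imp[of B z] by (cases z) auto

lemma box_supported_integrable: "box_supported B g \<Longrightarrow> integrable lborel g"
  by (rule integrable_vanishing_outside_ball[where R="2*B"])
     (simp add: box_supported_def, erule box_supported_vanishing)

lemma box_supported_integrable_slice:
  assumes "box_supported B g" shows "integrable lborel (\<lambda>v. g (y,v))"
proof (rule integrable_vanishing_outside_ball[where R=B])
  have "continuous_on UNIV g" using assms by (simp add: box_supported_def)
  then show "continuous_on UNIV (\<lambda>v. g (y,v))"
    by (rule continuous_on_compose2) (auto intro!: continuous_intros)
qed (use assms in \<open>simp add: box_supported_def\<close>)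

lemma box_supported_continuous_slice_integral:
  "box_supported B g \<Longrightarrow> continuous_on UNIV (\<lambda>y. \<integral>v. g (y,v) \<partial>lborel)"
  unfolding box_supported_def by (rule continuous_on_parametric_integral[where B=B]) auto

lemma box_supported_slice_integral_vanishing:
  "box_supported B g \<Longrightarrow> norm y > B \<Longrightarrow> (\<integral>v. g (y,v) \<partial>lborel) = 0"
  unfolding box_supported_def by (simp add: integral_eq_zero_AE)

lemma box_supported_weighted_slice_integrable:
  assumes "box_supported B g" "continuous_on UNIV \<psi>"
  shows "integrable lborel (\<lambda>y. \<psi> y *\<^sub>R (\<integral>v. g (y,v) \<partial>lborel))"
proof (rule integrable_vanishing_outside_ball[where R=B])
  show "continuous_on UNIV (\<lambda>y. \<psi> y *\<^sub>R (\<integral>v. g (y,v) \<partial>lborel))"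
    by (intro continuous_intros assms(2) box_supported_continuous_slice_integral[OF assms(1)])
qed (simp add: box_supported_slice_integral_vanishing[OF assms(1)])

lemma box_supported_Fubini:
  "box_supported B g \<Longrightarrow> (\<integral>y. \<integral>v. g (y,v) \<partial>lborel \<partial>lborel) = (\<integral>z. g z \<partial>lborel)"
  using lborel_pair.integral_fst'[of g] box_supported_integrable[of B g] by (simp add: lborel_prod)

lemma emeasure_lborel_ball:
  assumes "\<gamma> \<ge> 0"
  shows "emeasure lborel (ball (c::'a::euclidean_space) \<gamma>) =
           ennreal (\<gamma> ^ DIM('a) * measure lborel (ball (0::'a) 1))"
  using emeasure_lborel_ball_finite[of c \<gamma>] content_ball_conv_unit_ball[OF assms, of c]
  by (subst emeasure_eq_ennreal_measure) auto

lemma measurable_indicator_ball_pair: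
  "(\<lambda>p. indicator (ball (fst p) \<beta>) (snd p) :: ennreal)
     \<in> borel_measurable (lborel \<Otimes>\<^sub>M (lborel :: ('a::euclidean_space) measure))"
proof -
  have "{p::'a\<times>'a. dist (fst p) (snd p) < \<beta>} \<in> sets borel"
    by (intro borel_open open_Collect_less) (intro continuous_intros)+
  then have "(indicator {p::'a\<times>'a. dist (fst p) (snd p) < \<beta>} :: _ \<Rightarrow> ennreal) \<in> borel_measurable borel"
    by (rule borel_measurable_indicator)
  moreover have "(\<lambda>p. indicator (ball (fst p) \<beta>) (snd p) :: ennreal) =
      indicator {p::'a\<times>'a. dist (fst p) (snd p) < \<beta>}"
    by (auto simp: indicator_def fun_eq_iff)
  ultimately show ?thesis by (simp add: lborel_prod)
qed

text \<open>Cancellation inequality for extended nonnegative reals; also valid when \<sigma> is 0 or \<infinity>.\<close>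
lemma ennreal_inverse_mult_self_le:
  fixes \<sigma> :: ennreal assumes m: "m > 0"
  shows "inverse (ennreal m * \<sigma>) * \<sigma> \<le> ennreal (1 / m)"
proof (cases \<sigma>)
  case (real c)
  show ?thesis
  proof (cases "c = 0")
    case True then show ?thesis using real by simp
  next
    case False
    then have c: "c > 0" using real by simp
    have "inverse (ennreal m * \<sigma>) * \<sigma> = ennreal (inverse (m * c)) * ennreal c"
      using real m c by (simp add: ennreal_mult'[symmetric] inverse_ennreal)
    also have "\<dots> = ennreal (1 / m)" using m c by (simp add: ennreal_mult'[symmetric] field_simps)
    finally show ?thesis by simp
  qed
next
  case top then show ?thesis using m by (simp add: ennreal_mult_top)
qed

definition supported_density :: "real \<Rightarrow> (real^'d \<Rightarrow> real) \<Rightarrow> bool" where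
  "supported_density B g \<longleftrightarrow>
     continuous_on UNIV g \<and> (\<forall>y. 0 \<le> g y) \<and> (\<forall>y. norm y > B \<longrightarrow> g y = 0)"

locale kernel =
  fixes \<phi> :: "real^'d \<Rightarrow> real" and r R :: real
  assumes kernel_continuous: "continuous_on UNIV \<phi>"
    and kernel_nonneg: "\<And>x. \<phi> x \<ge> 0"
    and radii_pos: "r > 0" "R > 0"
    and kernel_pos: "\<And>x. norm x \<le> r \<Longrightarrow> \<phi> x > 0"
    and kernel_vanishing: "\<And>x. norm x \<ge> R \<Longrightarrow> \<phi> x = 0"
begin

definition inf_kernel :: real where "inf_kernel = Inf (\<phi> ` ball 0 r)"
definition sup_kernel :: real where "sup_kernel = Sup (\<phi> ` ball 0 R)"

definition conv :: "(real^'d \<Rightarrow> real) \<Rightarrow> real^'d \<Rightarrow> real" where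
  "conv g x = (\<integral>w. \<phi> (x - w) * g w \<partial>lborel)"

definition density_ratio :: "(real^'d \<Rightarrow> real) \<Rightarrow> real^'d \<Rightarrow> real" where
  "density_ratio g x = (if conv g x > 0 then g x / conv g x else 0)"

definition local_mass :: "(real^'d \<Rightarrow> real) \<Rightarrow> real^'d \<Rightarrow> ennreal" where
  "local_mass g z = (\<integral>\<^sup>+w. indicator (ball z (r/2)) w * ennreal (g w) \<partial>lborel)"

definition covering_constant :: real where
  "covering_constant = sup_kernel * (((2*R + r)/r) ^ CARD('d) / inf_kernel)"

lemma r_less_R: "r < R"
proof (rule ccontr)
  assume "\<not> r < R"
  obtain i :: 'd where True by simp
  let ?x = "R *\<^sub>R axis i (1::real)"
  have "norm ?x = R" using radii_pos by simp
  then show False using kernel_pos[of ?x] kernel_vanishing[of ?x] \<open>\<not> r < R\<close> by simp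
qed

lemma inf_kernel_pos: "inf_kernel > 0"
  and inf_kernel_le: "norm z < r \<Longrightarrow> inf_kernel \<le> \<phi> z"
proof -
  obtain p where p: "p \<in> cball 0 r" "\<And>y. y \<in> cball 0 r \<Longrightarrow> \<phi> p \<le> \<phi> y"
    using continuous_attains_inf[of "cball (0::real^'d) r" \<phi>] radii_pos
      continuous_on_subset[OF kernel_continuous] by auto
  have ne: "\<phi> ` ball 0 r \<noteq> {}" using radii_pos by auto
  have "\<phi> p \<le> inf_kernel" unfolding inf_kernel_def by (rule cInf_greatest[OF ne]) (use p in auto)
  moreover have "\<phi> p > 0" using p kernel_pos by auto
  ultimately show "inf_kernel > 0" by simp
  show "inf_kernel \<le> \<phi> z" if "norm z < r"
    unfolding inf_kernel_def
    by (rule cInf_lower) (use that kernel_nonneg in \<open>auto intro: bdd_belowI[where m=0]\<close>)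
qed

lemma kernel_le_sup_kernel: "norm z < R \<Longrightarrow> \<phi> z \<le> sup_kernel"
  and sup_kernel_nonneg: "0 \<le> sup_kernel"
proof -
  have "bounded (\<phi> ` cball 0 R)"
    by (intro compact_imp_bounded compact_continuous_image
        continuous_on_subset[OF kernel_continuous]) auto
  then have bdd: "bdd_above (\<phi> ` ball 0 R)"
    by (rule bounded_imp_bdd_above[OF bounded_subset]) auto
  show le: "\<phi> z \<le> sup_kernel" if "norm z < R" for z
    unfolding sup_kernel_def by (rule cSup_upper[OF _ bdd]) (use that in auto)
  show "0 \<le> sup_kernel" using le[of 0] kernel_nonneg[of 0] radii_pos by simp
qed

lemma kernel_le_indicator: "ennreal (\<phi> (x - y)) \<le> ennreal sup_kernel * indicator (ball y R) x"
proof (cases "dist y x < R")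
  case True
  then show ?thesis
    using kernel_le_sup_kernel[of "x - y"] by (simp add: dist_norm norm_minus_commute ennreal_leI)
next
  case False
  then show ?thesis using kernel_vanishing[of "x - y"] by (simp add: dist_norm norm_minus_commute)
qed

lemma continuous_kernel_shift: "continuous_on UNIV (\<lambda>y. \<phi> (x - y))"
  by (rule continuous_on_compose2[OF kernel_continuous]) (auto intro!: continuous_intros)

lemma conv_integrand_integrable:
  assumes "continuous_on UNIV g" "\<And>y. norm y > B \<Longrightarrow> g y = 0"
  shows "integrable lborel (\<lambda>w. \<phi> (x - w) * g w)"
  by (rule integrable_vanishing_outside_ball[where R=B])
     (use assms in \<open>auto intro!: continuous_intros continuous_kernel_shift\<close>)

lemma conv_nonneg: "(\<And>y. 0 \<le> g y) \<Longrightarrow> 0 \<le> conv g x"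
  unfolding conv_def by (intro integral_nonneg_AE AE_I2 mult_nonneg_nonneg kernel_nonneg) auto

lemma continuous_convolution:
  fixes g :: "real^'d \<Rightarrow> 'c::{banach,second_countable_topology}"
  assumes "continuous_on UNIV g" "\<And>y. norm y > B \<Longrightarrow> g y = 0"
  shows "continuous_on UNIV (\<lambda>x. \<integral>w. \<phi> (x - w) *\<^sub>R g w \<partial>lborel)"
proof -
  have "continuous_on UNIV (\<lambda>p::(real^'d)\<times>(real^'d). \<phi> (fst p - snd p) *\<^sub>R g (snd p))"
    by (intro continuous_intros continuous_on_compose2[OF kernel_continuous]
        continuous_on_compose2[OF assms(1)]) auto
  then have "continuous_on UNIV (\<lambda>x. \<integral>w. (\<lambda>p. \<phi> (fst p - snd p) *\<^sub>R g (snd p)) (x, w) \<partial>lborel)"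
    by (intro continuous_on_parametric_integral[where B=B]) (auto simp: assms(2))
  then show ?thesis by simp
qed

lemma continuous_conv:
  "continuous_on UNIV g \<Longrightarrow> (\<And>y. norm y > B \<Longrightarrow> g y = 0) \<Longrightarrow> continuous_on UNIV (conv g)"
  using continuous_convolution[of g B] unfolding conv_def[abs_def] by simp

text \<open>If z is within r/2 of x, the whole ball B(z, r/2) lies in B(x, r), where the kernel is
  at least inf_kernel; hence (\<phi> * g)(x) dominates inf_kernel times the local mass at z.\<close>
lemma local_mass_le_conv:
  assumes g: "supported_density B g" and xz: "dist x z < r / 2"
  shows "ennreal inf_kernel * local_mass g z \<le> ennreal (conv g x)"
proof -
  have cg: "continuous_on UNIV g" and nn: "\<And>y. 0 \<le> g y" and sp: "\<And>y. norm y > B \<Longrightarrow> g y = 0"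
    using g by (auto simp: supported_density_def)
  have [measurable]: "g \<in> borel_measurable lborel"
    by (simp add: borel_measurable_continuous_onI[OF cg])
  have [measurable]: "(\<lambda>w. indicator (ball z (r/2)) w :: ennreal) \<in> borel_measurable lborel"
    by (simp add: borel_measurable_indicator borel_open)
  have "ennreal inf_kernel * local_mass g z
      = (\<integral>\<^sup>+w. ennreal inf_kernel * (indicator (ball z (r/2)) w * ennreal (g w)) \<partial>lborel)"
    unfolding local_mass_def by (rule nn_integral_cmult[symmetric]) measurable
  also have "\<dots> \<le> (\<integral>\<^sup>+w. ennreal (\<phi> (x - w) * g w) \<partial>lborel)"
  proof (rule nn_integral_mono)
    fix w
    show "ennreal inf_kernel * (indicator (ball z (r/2)) w * ennreal (g w)) \<le> ennreal (\<phi> (x - w) * g w)"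
    proof (cases "w \<in> ball z (r/2)")
      case True
      then have "dist x w < r" using xz dist_triangle[of x w z] by (simp add: dist_commute)
      then have "inf_kernel \<le> \<phi> (x - w)" using inf_kernel_le[of "x - w"] by (simp add: dist_norm)
      then have "inf_kernel * g w \<le> \<phi> (x - w) * g w" using nn by (intro mult_right_mono) auto
      then show ?thesis
        using True inf_kernel_pos nn by (simp add: ennreal_mult'[symmetric] ennreal_leI)
    qed simp
  qed
  also have "\<dots> = ennreal (conv g x)"
    unfolding conv_def
    by (rule nn_integral_eq_integral[OF conv_integrand_integrable[OF cg sp]])
       (auto intro!: mult_nonneg_nonneg kernel_nonneg nn)
  finally show ?thesis .
qed

lemma density_ratio_le_local_mass:
  assumes g: "supported_density B g" and xz: "dist x z < r / 2"
  shows "ennreal (density_ratio g x) \<le> ennreal (g x) * inverse (ennreal inf_kernel * local_mass g z)"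
proof (cases "conv g x > 0 \<and> g x > 0")
  case False
  then have "density_ratio g x = 0"
    using g by (auto simp: density_ratio_def supported_density_def less_le)
  then show ?thesis by simp
next
  case True
  note low = local_mass_le_conv[OF g xz]
  then have "local_mass g z \<noteq> top" using inf_kernel_pos by (auto simp: ennreal_mult_top top_unique)
  then obtain c where c: "local_mass g z = ennreal c" "c \<ge> 0" by (cases "local_mass g z") auto
  show ?thesis
  proof (cases "c = 0")
    case True
    then show ?thesis using c \<open>conv g x > 0 \<and> g x > 0\<close> by (simp add: ennreal_mult_top)
  next
    case False
    then have cp: "c > 0" using c by simp
    have "inf_kernel * c \<le> conv g x"
      using low c inf_kernel_pos True by (simp add: ennreal_mult'[symmetric])
    then have "g x / conv g x \<le> g x / (inf_kernel * c)"
      using True cp inf_kernel_pos by (intro divide_left_mono) auto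
    moreover have "ennreal (g x) * inverse (ennreal inf_kernel * local_mass g z) =
        ennreal (g x / (inf_kernel * c))"
      using c cp inf_kernel_pos True
      by (simp add: ennreal_mult'[symmetric] inverse_ennreal divide_inverse)
    ultimately show ?thesis using True by (simp add: density_ratio_def ennreal_leI)
  qed
qed

lemma density_ratio_nonneg: "supported_density B g \<Longrightarrow> 0 \<le> density_ratio g x"
  by (simp add: density_ratio_def supported_density_def)

lemma measurable_density_ratio:
  assumes "supported_density B g"
  shows "density_ratio g \<in> borel_measurable lborel"
proof -
  have cg: "continuous_on UNIV g" and sp: "\<And>y. norm y > B \<Longrightarrow> g y = 0"
    using assms by (auto simp: supported_density_def)
  have [measurable]: "g \<in> borel_measurable lborel" "conv g \<in> borel_measurable lborel"
    using cg continuous_conv[OF cg sp] by (simp_all add: borel_measurable_continuous_onI)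
  show ?thesis unfolding density_ratio_def[abs_def] by measurable
qed

lemma measurable_local_mass:
  assumes "supported_density B g"
  shows "local_mass g \<in> borel_measurable lborel"
proof -
  have [measurable]: "g \<in> borel_measurable lborel"
    using assms by (simp add: supported_density_def borel_measurable_continuous_onI)
  have [measurable]: "(\<lambda>p. indicator (ball (fst p) (r/2)) (snd p) :: ennreal)
      \<in> borel_measurable (lborel \<Otimes>\<^sub>M (lborel :: (real^'d) measure))"
    by (rule measurable_indicator_ball_pair)
  show ?thesis
    unfolding local_mass_def[abs_def]
    by (rule lborel.borel_measurable_nn_integral) (simp add: case_prod_beta, measurable)
qed

lemma density_ratio_le_ball_average:
  assumes g: "supported_density B g"
  shows "emeasure lborel (ball x (r/2)) * ennreal (density_ratio g x) \<le>
    (\<integral>\<^sup>+z. indicator (ball x (r/2)) z * (ennreal (g x) * inverse (ennreal inf_kernel * local_mass g z)) \<partial>lborel)"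
proof -
  have "emeasure lborel (ball x (r/2)) * ennreal (density_ratio g x) =
      (\<integral>\<^sup>+z. ennreal (density_ratio g x) * indicator (ball x (r/2)) z \<partial>lborel)"
    by (simp add: nn_integral_cmult_indicator mult.commute)
  also have "\<dots> \<le> (\<integral>\<^sup>+z. indicator (ball x (r/2)) z *
      (ennreal (g x) * inverse (ennreal inf_kernel * local_mass g z)) \<partial>lborel)"
    by (intro nn_integral_mono)
       (auto simp: indicator_def intro!: density_ratio_le_local_mass[OF g])
  finally show ?thesis .
qed

text \<open>After exchanging the order of integration: for fixed z, the x-integral over B(y,R) of
  g(x) / (inf_kernel * local_mass g z) restricted to |x - z| < r/2 is at most 1/inf_kernel,
  and it vanishes unless z \<in> B(y, R + r/2).\<close>
lemma ball_integral_mass_quotient_le: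
  assumes g: "supported_density B g"
  shows "(\<integral>\<^sup>+x. indicator (ball y R) x * (indicator (ball x (r/2)) z *
            (ennreal (g x) * inverse (ennreal inf_kernel * local_mass g z))) \<partial>lborel)
         \<le> ennreal (1 / inf_kernel) * indicator (ball y (R + r/2)) z"
proof -
  have [measurable]: "g \<in> borel_measurable lborel"
    using g by (simp add: supported_density_def borel_measurable_continuous_onI)
  have [measurable]: "(\<lambda>x. indicator (ball c \<gamma>) x :: ennreal) \<in> borel_measurable lborel"
    for c :: "real^'d" and \<gamma> by (simp add: borel_measurable_indicator borel_open)
  let ?\<sigma> = "local_mass g z"
  have "(\<integral>\<^sup>+x. indicator (ball y R) x * (indicator (ball x (r/2)) z *
        (ennreal (g x) * inverse (ennreal inf_kernel * ?\<sigma>))) \<partial>lborel)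
      = (\<integral>\<^sup>+x. indicator (ball y R) x * indicator (ball z (r/2)) x * ennreal (g x) \<partial>lborel) *
          inverse (ennreal inf_kernel * ?\<sigma>)"
    by (subst nn_integral_multc[symmetric], measurable)
       (intro nn_integral_cong, auto simp: indicator_def dist_commute)
  also have "\<dots> \<le> (indicator (ball y (R + r/2)) z * ?\<sigma>) * inverse (ennreal inf_kernel * ?\<sigma>)"
  proof (rule mult_right_mono)
    show "(\<integral>\<^sup>+x. indicator (ball y R) x * indicator (ball z (r/2)) x * ennreal (g x) \<partial>lborel)
        \<le> indicator (ball y (R + r/2)) z * ?\<sigma>"
    proof (cases "z \<in> ball y (R + r/2)")
      case True
      then show ?thesis
        unfolding local_mass_def by (auto intro!: nn_integral_mono simp: indicator_def)
    next
      case False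
      have "\<not> (dist y x < R \<and> dist z x < r/2)" for x
        using False dist_triangle[of y z x] by (auto simp: dist_commute)
      then have "(\<integral>\<^sup>+x. indicator (ball y R) x * indicator (ball z (r/2)) x * ennreal (g x) \<partial>lborel) = 0"
        by (subst nn_integral_0_iff_AE) (auto simp: indicator_def)
      then show ?thesis by simp
    qed
  qed simp
  also have "\<dots> = indicator (ball y (R + r/2)) z * (inverse (ennreal inf_kernel * ?\<sigma>) * ?\<sigma>)"
    by (simp add: algebra_simps)
  also have "\<dots> \<le> indicator (ball y (R + r/2)) z * ennreal (1 / inf_kernel)"
    by (intro mult_left_mono ennreal_inverse_mult_self_le inf_kernel_pos) simp
  finally show ?thesis by (simp add: mult.commute)
qed

lemma density_ratio_ball_integral_le:
  assumes g: "supported_density B g"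
  shows "(\<integral>\<^sup>+x. indicator (ball y R) x * ennreal (density_ratio g x) \<partial>lborel)
           \<le> ennreal (((2*R + r)/r) ^ CARD('d) / inf_kernel)"
proof -
  define \<beta> where "\<beta> = r / 2"
  have \<beta>: "\<beta> > 0" using radii_pos by (simp add: \<beta>_def)
  define u where "u = measure lborel (ball (0::real^'d) 1)"
  have u: "u > 0" unfolding u_def by (rule content_ball_pos) simp
  have vol: "emeasure lborel (ball (c::real^'d) \<gamma>) = ennreal (\<gamma> ^ CARD('d) * u)" if "\<gamma> \<ge> 0" for c \<gamma>
    using emeasure_lborel_ball[OF that, of c] by (simp add: u_def)
  define Q where "Q = (\<lambda>x z. ennreal (g x) * inverse (ennreal inf_kernel * local_mass g z))"
  have [measurable]: "g \<in> borel_measurable lborel"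
    using g by (simp add: supported_density_def borel_measurable_continuous_onI)
  have [measurable]: "density_ratio g \<in> borel_measurable lborel" "local_mass g \<in> borel_measurable lborel"
    using measurable_density_ratio[OF g] measurable_local_mass[OF g] by auto
  have [measurable]: "(\<lambda>p. indicator (ball (fst p) \<beta>) (snd p) :: ennreal)
      \<in> borel_measurable (lborel \<Otimes>\<^sub>M (lborel :: (real^'d) measure))"
    by (rule measurable_indicator_ball_pair)
  have [measurable]: "(\<lambda>x. indicator (ball c \<gamma>) x :: ennreal) \<in> borel_measurable lborel"
    for c :: "real^'d" and \<gamma> by (simp add: borel_measurable_indicator borel_open)
  define X where "X = (\<integral>\<^sup>+x. indicator (ball y R) x * ennreal (density_ratio g x) \<partial>lborel)"
  have "ennreal (\<beta> ^ CARD('d) * u) * X =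
      (\<integral>\<^sup>+x. indicator (ball y R) x * (emeasure lborel (ball x \<beta>) * ennreal (density_ratio g x)) \<partial>lborel)"
    unfolding X_def using \<beta>
    by (subst nn_integral_cmult[symmetric]) (measurable, simp add: vol algebra_simps)
  also have "\<dots> \<le> (\<integral>\<^sup>+x. \<integral>\<^sup>+z. indicator (ball y R) x * (indicator (ball x \<beta>) z * Q x z) \<partial>lborel \<partial>lborel)"
    unfolding Q_def \<beta>_def
    by (intro nn_integral_mono, subst nn_integral_cmult, measurable)
       (intro mult_left_mono density_ratio_le_ball_average[OF g], simp)
  also have "\<dots> = (\<integral>\<^sup>+z. \<integral>\<^sup>+x. indicator (ball y R) x * (indicator (ball x \<beta>) z * Q x z) \<partial>lborel \<partial>lborel)"
    unfolding Q_def by (rule lborel_pair.Fubini'[symmetric]) (simp add: case_prod_beta, measurable)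
  also have "\<dots> \<le> (\<integral>\<^sup>+z. ennreal (1 / inf_kernel) * indicator (ball y (R + \<beta>)) z \<partial>lborel)"
    unfolding Q_def \<beta>_def by (intro nn_integral_mono ball_integral_mass_quotient_le[OF g])
  also have "\<dots> = ennreal ((R + \<beta>) ^ CARD('d) * u / inf_kernel)"
    using vol[of "R + \<beta>" y] radii_pos \<beta> inf_kernel_pos u
    by (simp add: nn_integral_cmult_indicator ennreal_mult'[symmetric])
  finally have main: "ennreal (\<beta> ^ CARD('d) * u) * X \<le> ennreal ((R + \<beta>) ^ CARD('d) * u / inf_kernel)" .
  have pos: "\<beta> ^ CARD('d) * u > 0" using \<beta> u by simp
  have "ennreal (1 / (\<beta> ^ CARD('d) * u)) * ennreal (\<beta> ^ CARD('d) * u) = 1"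
    using pos \<beta> by (subst ennreal_mult'[symmetric]) auto
  then have "X = ennreal (1 / (\<beta> ^ CARD('d) * u)) * (ennreal (\<beta> ^ CARD('d) * u) * X)"
    by (metis mult.assoc mult_1)
  also have "\<dots> \<le> ennreal (1 / (\<beta> ^ CARD('d) * u)) * ennreal ((R + \<beta>) ^ CARD('d) * u / inf_kernel)"
    by (intro mult_left_mono main) simp
  also have "\<dots> = ennreal (((R + \<beta>) / \<beta>) ^ CARD('d) / inf_kernel)"
    using pos inf_kernel_pos u \<beta> radii_pos
    by (simp add: ennreal_mult'[symmetric] power_divide field_simps)
  also have "(R + \<beta>) / \<beta> = (2 * R + r) / r" using radii_pos by (simp add: \<beta>_def field_simps)
  finally show ?thesis unfolding X_def .
qed

lemma covering_constant_nonneg: "covering_constant \<ge> 0"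
  using sup_kernel_nonneg inf_kernel_pos radii_pos by (simp add: covering_constant_def)

text \<open>Integrating the density ratio against the kernel centred at any y: since
  \<phi>(x - y) \<le> sup_kernel on B(y, R) and vanishes outside, the previous lemma gives the
  bound covering_constant.\<close>
lemma kernel_density_ratio_integral_le:
  assumes g: "supported_density B g"
  shows "(\<integral>\<^sup>+x. ennreal (\<phi> (x - y)) * ennreal (density_ratio g x) \<partial>lborel) \<le> ennreal covering_constant"
proof -
  have [measurable]: "density_ratio g \<in> borel_measurable lborel"
    by (rule measurable_density_ratio[OF g])
  have [measurable]: "(\<lambda>x. indicator (ball y R) x :: ennreal) \<in> borel_measurable lborel"
    by (simp add: borel_measurable_indicator borel_open)
  have "(\<integral>\<^sup>+x. ennreal (\<phi> (x - y)) * ennreal (density_ratio g x) \<partial>lborel)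
      \<le> (\<integral>\<^sup>+x. ennreal sup_kernel * (indicator (ball y R) x * ennreal (density_ratio g x)) \<partial>lborel)"
    by (intro nn_integral_mono)
       (simp add: mult.assoc[symmetric] mult_right_mono kernel_le_indicator)
  also have "\<dots> = ennreal sup_kernel * (\<integral>\<^sup>+x. indicator (ball y R) x * ennreal (density_ratio g x) \<partial>lborel)"
    by (rule nn_integral_cmult) measurable
  also have "\<dots> \<le> ennreal sup_kernel * ennreal (((2*R + r)/r) ^ CARD('d) / inf_kernel)"
    by (intro mult_left_mono density_ratio_ball_integral_le[OF g]) simp
  also have "\<dots> = ennreal covering_constant"
    unfolding covering_constant_def using sup_kernel_nonneg by (simp only: ennreal_mult')
  finally show ?thesis .
qed

lemma ennreal_conv:
  assumes e: "supported_density B e"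
  shows "ennreal (conv e x) = (\<integral>\<^sup>+y. ennreal (\<phi> (x - y)) * ennreal (e y) \<partial>lborel)"
proof -
  have ce: "continuous_on UNIV e" and nne: "\<And>y. 0 \<le> e y" and spe: "\<And>y. norm y > B \<Longrightarrow> e y = 0"
    using e by (auto simp: supported_density_def)
  have "ennreal (conv e x) = (\<integral>\<^sup>+y. ennreal (\<phi> (x - y) * e y) \<partial>lborel)"
    unfolding conv_def
    by (rule nn_integral_eq_integral[OF conv_integrand_integrable[OF ce spe], symmetric])
       (auto intro!: mult_nonneg_nonneg kernel_nonneg nne)
  then show ?thesis using kernel_nonneg nne by (simp add: ennreal_mult')
qed

text \<open>After writing \<phi>*e as an integral over y and exchanging the order of integration,
  the inner x-integral is bounded by the previous lemma.\<close>
lemma covering_estimate: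
  assumes g: "supported_density B g" and e: "supported_density B e"
  shows "(\<integral>\<^sup>+x. ennreal (density_ratio g x * conv e x) \<partial>lborel)
           \<le> ennreal (covering_constant * (\<integral>y. e y \<partial>lborel))"
proof -
  have ce: "continuous_on UNIV e" and nne: "\<And>y. 0 \<le> e y" and spe: "\<And>y. norm y > B \<Longrightarrow> e y = 0"
    using e by (auto simp: supported_density_def)
  have [measurable]: "density_ratio g \<in> borel_measurable lborel"
    by (rule measurable_density_ratio[OF g])
  have [measurable]: "e \<in> borel_measurable lborel"
    by (simp add: borel_measurable_continuous_onI[OF ce])
  have [measurable]: "(\<lambda>y. \<phi> (x - y)) \<in> borel_measurable lborel" for x
    by (simp add: borel_measurable_continuous_onI continuous_kernel_shift)
  have "continuous_on UNIV (\<lambda>x. \<phi> (x - y))" for y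
    by (rule continuous_on_compose2[OF kernel_continuous]) (auto intro!: continuous_intros)
  then have [measurable]: "(\<lambda>x. \<phi> (x - y)) \<in> borel_measurable lborel" for y
    by (simp add: borel_measurable_continuous_onI)
  have "(\<lambda>p::(real^'d)\<times>(real^'d). \<phi> (fst p - snd p)) \<in> borel_measurable borel"
    by (rule borel_measurable_continuous_onI)
       (intro continuous_intros continuous_on_compose2[OF kernel_continuous], auto)
  then have [measurable]: "(\<lambda>p::(real^'d)\<times>(real^'d). \<phi> (fst p - snd p)) \<in> borel_measurable (lborel \<Otimes>\<^sub>M lborel)"
    by (simp add: lborel_prod)
  have "(\<integral>\<^sup>+x. ennreal (density_ratio g x * conv e x) \<partial>lborel) =
      (\<integral>\<^sup>+x. \<integral>\<^sup>+y. ennreal (e y) * (ennreal (\<phi> (x - y)) * ennreal (density_ratio g x)) \<partial>lborel \<partial>lborel)"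
  proof (rule nn_integral_cong)
    fix x
    have "ennreal (density_ratio g x * conv e x) =
        ennreal (density_ratio g x) * (\<integral>\<^sup>+y. ennreal (\<phi> (x - y)) * ennreal (e y) \<partial>lborel)"
      using density_ratio_nonneg[OF g] by (simp add: ennreal_conv[OF e] ennreal_mult')
    also have "\<dots> = (\<integral>\<^sup>+y. ennreal (density_ratio g x) * (ennreal (\<phi> (x - y)) * ennreal (e y)) \<partial>lborel)"
      by (rule nn_integral_cmult[symmetric]) measurable
    finally show "ennreal (density_ratio g x * conv e x) =
        (\<integral>\<^sup>+y. ennreal (e y) * (ennreal (\<phi> (x - y)) * ennreal (density_ratio g x)) \<partial>lborel)"
      by (simp add: mult_ac)
  qed
  also have "\<dots> = (\<integral>\<^sup>+y. \<integral>\<^sup>+x. ennreal (e y) * (ennreal (\<phi> (x - y)) * ennreal (density_ratio g x)) \<partial>lborel \<partial>lborel)"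
    by (rule lborel_pair.Fubini'[symmetric]) (simp add: case_prod_beta, measurable)
  also have "\<dots> = (\<integral>\<^sup>+y. ennreal (e y) * (\<integral>\<^sup>+x. ennreal (\<phi> (x - y)) * ennreal (density_ratio g x) \<partial>lborel) \<partial>lborel)"
    by (intro nn_integral_cong nn_integral_cmult) measurable
  also have "\<dots> \<le> (\<integral>\<^sup>+y. ennreal (e y) * ennreal covering_constant \<partial>lborel)"
    by (intro nn_integral_mono mult_left_mono kernel_density_ratio_integral_le[OF g]) simp
  also have "\<dots> = ennreal (\<integral>y. e y \<partial>lborel) * ennreal covering_constant"
    by (simp add: nn_integral_multc nn_integral_eq_integral[OF integrable_vanishing_outside_ball[OF ce spe]] nne)
  also have "\<dots> = ennreal (covering_constant * (\<integral>y. e y \<partial>lborel))"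
    using covering_constant_nonneg nne by (simp add: ennreal_mult' integral_nonneg_AE mult.commute)
  finally show ?thesis .
qed

text \<open>The constant is of the order announced in the theorem, since 2R + r \<le> 3R.\<close>
lemma covering_constant_le:
  "covering_constant \<le> 3 ^ CARD('d) * (sup_kernel / inf_kernel) * (R / r) ^ CARD('d)"
proof -
  have "(2*R + r)/r \<le> 3 * (R / r)" using r_less_R radii_pos by (simp add: field_simps)
  then have "((2*R + r)/r) ^ CARD('d) \<le> (3 * (R / r)) ^ CARD('d)"
    using radii_pos by (intro power_mono) auto
  then have "sup_kernel * (((2*R + r)/r) ^ CARD('d) / inf_kernel) \<le>
      sup_kernel * ((3 * (R / r)) ^ CARD('d) / inf_kernel)"
    using sup_kernel_nonneg inf_kernel_pos by (intro mult_left_mono divide_right_mono) auto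
  then show ?thesis unfolding covering_constant_def by (simp add: power_mult_distrib field_simps)
qed

end

locale kinetic_solution = kernel \<phi> r R for \<phi> :: "real^'d \<Rightarrow> real" and r R +
  fixes \<Phi> :: "real^'d \<Rightarrow> real" and f :: "real^'d \<Rightarrow> real^'d \<Rightarrow> real \<Rightarrow> real"
  assumes potential_smooth: "smooth_fun \<Phi>"
    and potential_nonneg: "\<And>x. \<Phi> x \<ge> 0"
    and solution_smooth: "smooth_fun (\<lambda>((x, v), t). f x v t)"
    and solution_nonneg: "\<And>x v t. f x v t \<ge> 0"
    and solution_support: "\<And>T. T \<ge> 0 \<Longrightarrow>
       \<exists>B. \<forall>x v t. 0 \<le> t \<and> t \<le> T \<and> f x v t \<noteq> 0 \<longrightarrow> norm x \<le> B \<and> norm v \<le> B"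
    and solution_equation: "kinetic_eq \<phi> \<Phi> f"
begin

definition F :: "(((real^'d) \<times> (real^'d)) \<times> real) \<Rightarrow> real" where
  "F = (\<lambda>((x, v), t). f x v t)"

definition f_t :: "real^'d \<Rightarrow> real^'d \<Rightarrow> real \<Rightarrow> real" where
  "f_t x v t = iter_dir_deriv [((0, 0), 1)] F ((x, v), t)"

definition f_x :: "'d \<Rightarrow> real^'d \<Rightarrow> real^'d \<Rightarrow> real \<Rightarrow> real" where
  "f_x i x v t = iter_dir_deriv [((axis i 1, 0), 0)] F ((x, v), t)"

definition f_v :: "'d \<Rightarrow> real^'d \<Rightarrow> real^'d \<Rightarrow> real \<Rightarrow> real" where
  "f_v i x v t = iter_dir_deriv [((0, axis i 1), 0)] F ((x, v), t)"

definition \<Phi>_x :: "'d \<Rightarrow> real^'d \<Rightarrow> real" where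
  "\<Phi>_x i x = iter_dir_deriv [axis i 1] \<Phi> x"

lemma F_smooth: "smooth_fun F"
  using solution_smooth by (simp add: F_def)

lemma basis_directions:
  "((0::real^'d, 0::real^'d), 1::real) \<in> Basis"
  "((axis i 1 :: real^'d, 0::real^'d), 0::real) \<in> Basis"
  "((0::real^'d, axis i 1 :: real^'d), 0::real) \<in> Basis"
  by (simp_all add: Basis_prod_def zero_prod_def)

lemma f_has_derivative_t: "((\<lambda>s. f x v s) has_real_derivative f_t x v s) (at s)"
  using smooth_fun_has_partial_derivative[OF F_smooth basis_directions(1), where p="((x,v),0)" and s=s]
  by (simp add: f_t_def F_def)

lemma f_has_derivative_x:
  "((\<lambda>s. f (x + s *\<^sub>R axis i 1) v t) has_real_derivative f_x i (x + s *\<^sub>R axis i 1) v t) (at s)"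
  using smooth_fun_has_partial_derivative[OF F_smooth basis_directions(2), where p="((x,v),t)" and s=s]
  by (simp add: f_x_def F_def)

lemma f_has_derivative_v:
  "((\<lambda>s. f x (v + s *\<^sub>R axis i 1) t) has_real_derivative f_v i x (v + s *\<^sub>R axis i 1) t) (at s)"
  using smooth_fun_has_partial_derivative[OF F_smooth basis_directions(3), where p="((x,v),t)" and s=s]
  by (simp add: f_v_def F_def)

lemma \<Phi>_has_derivative_x:
  "((\<lambda>s. \<Phi> (x + s *\<^sub>R axis i 1)) has_real_derivative \<Phi>_x i (x + s *\<^sub>R axis i 1)) (at s)"
  using smooth_fun_has_partial_derivative[OF potential_smooth, where p=x and s=s]
  by (simp add: \<Phi>_x_def)

lemma continuous_f_t_joint: "continuous_on UNIV (\<lambda>p. f_t (fst (fst p)) (snd (fst p)) (snd p))"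
  using smooth_fun_partial_continuous[OF F_smooth basis_directions(1)] by (simp add: f_t_def)

lemma continuous_at_fixed_time:
  assumes "continuous_on UNIV (G :: (((real^'d) \<times> (real^'d)) \<times> real) \<Rightarrow> real)"
  shows "continuous_on UNIV (\<lambda>z. G (z, s))"
  by (rule continuous_on_compose2[OF assms]) (auto intro!: continuous_intros)

lemma continuous_f: "continuous_on UNIV (\<lambda>z. f (fst z) (snd z) s)"
  using continuous_at_fixed_time[OF smooth_fun_continuous[OF F_smooth], of s]
  by (simp add: F_def case_prod_beta)

lemma continuous_f_t: "continuous_on UNIV (\<lambda>z. f_t (fst z) (snd z) s)"
  using continuous_at_fixed_time[OF continuous_f_t_joint, where s=s] by simp

lemma continuous_f_x: "continuous_on UNIV (\<lambda>z. f_x i (fst z) (snd z) s)"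
  using continuous_at_fixed_time[OF smooth_fun_partial_continuous[OF F_smooth basis_directions(2)], where s=s]
  by (simp add: f_x_def)

lemma continuous_f_v: "continuous_on UNIV (\<lambda>z. f_v i (fst z) (snd z) s)"
  using continuous_at_fixed_time[OF smooth_fun_partial_continuous[OF F_smooth basis_directions(3)], where s=s]
  by (simp add: f_v_def)

lemma continuous_velocity_slice:
  "continuous_on UNIV (g :: (real^'d) \<times> (real^'d) \<Rightarrow> real) \<Longrightarrow> continuous_on UNIV (\<lambda>v. g (x, v))"
  by (rule continuous_on_compose2) (auto intro!: continuous_intros)

lemma continuous_\<Phi>_x: "continuous_on UNIV (\<lambda>z::(real^'d) \<times> (real^'d). \<Phi>_x i (fst z))"
proof -
  have "continuous_on UNIV (\<Phi>_x i)"
    using smooth_fun_partial_continuous[OF potential_smooth, of "axis i 1"] by (simp add: \<Phi>_x_def[abs_def])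
  then show ?thesis by (rule continuous_on_compose2) (auto intro!: continuous_intros)
qed

lemma kinetic_eq_coordinates:
  assumes "t \<ge> 0"
  shows "f_t x v t = - (\<Sum>i\<in>UNIV. v $ i * f_x i x v t) + (\<Sum>i\<in>UNIV. \<Phi>_x i x * f_v i x v t)
     - (\<Sum>i\<in>UNIV. f_v i x v t * (u_tilde \<phi> f x t $ i - v $ i) - f x v t)"
proof -
  let ?U = "u_tilde \<phi> f x t"
  have time: "deriv (\<lambda>s. f x v s) t = f_t x v t" by (rule DERIV_imp_deriv[OF f_has_derivative_t])
  have transport: "v \<bullet> grad_d (\<lambda>y. f y v t) x = (\<Sum>i\<in>UNIV. v $ i * f_x i x v t)"
    unfolding grad_d_def inner_vec_def
    by (intro sum.cong refl) (simp add: dir_deriv_eqI[OF f_has_derivative_x[where s=0, simplified]])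
  have force: "div_d (\<lambda>w. f x w t *\<^sub>R grad_d \<Phi> x) v = (\<Sum>i\<in>UNIV. \<Phi>_x i x * f_v i x v t)"
    unfolding div_d_def
  proof (intro sum.cong refl)
    fix i
    have "grad_d \<Phi> x $ i = \<Phi>_x i x"
      unfolding grad_d_def by (simp add: dir_deriv_eqI[OF \<Phi>_has_derivative_x[where s=0, simplified]])
    then have "((\<lambda>s. (f x (v + s *\<^sub>R axis i 1) t *\<^sub>R grad_d \<Phi> x) $ i) has_real_derivative
        \<Phi>_x i x * f_v i x v t) (at 0)"
      using DERIV_cmult_right[OF f_has_derivative_v[of x v i t 0], of "grad_d \<Phi> x $ i"]
      by (simp add: mult.commute)
    then show "dir_deriv (\<lambda>y. (f x y t *\<^sub>R grad_d \<Phi> x) $ i) v (axis i 1) = \<Phi>_x i x * f_v i x v t"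
      by (rule dir_deriv_eqI)
  qed
  have alignment: "div_d (\<lambda>w. f x w t *\<^sub>R (?U - w)) v =
      (\<Sum>i\<in>UNIV. f_v i x v t * (?U $ i - v $ i) - f x v t)"
    unfolding div_d_def
  proof (intro sum.cong refl)
    fix i
    have "((\<lambda>s. f x (v + s *\<^sub>R axis i 1) t * (?U $ i - (v $ i + s))) has_real_derivative
        f_v i x v t * (?U $ i - v $ i) - f x v t) (at 0)"
      by (auto intro!: derivative_eq_intros f_has_derivative_v[where s=0, simplified])
    then show "dir_deriv (\<lambda>y. (f x y t *\<^sub>R (?U - y)) $ i) v (axis i 1) =
        f_v i x v t * (?U $ i - v $ i) - f x v t"
      by (intro dir_deriv_eqI) (simp add: axis_def)
  qed
  have "deriv (\<lambda>s. f x v s) t + v \<bullet> grad_d (\<lambda>y. f y v t) x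
        - div_d (\<lambda>w. f x w t *\<^sub>R grad_d \<Phi> x) v + div_d (\<lambda>w. f x w t *\<^sub>R (?U - w)) v = 0"
    using solution_equation assms unfolding kinetic_eq_def by blast
  then show ?thesis unfolding time transport force alignment by linarith
qed

definition supported_at :: "real \<Rightarrow> real \<Rightarrow> bool" where
  "supported_at B s \<longleftrightarrow> (\<forall>x v. norm x > B \<or> norm v > B \<longrightarrow> f x v s = 0)"

lemma supported_atD: "supported_at B s \<Longrightarrow> norm x > B \<or> norm v > B \<Longrightarrow> f x v s = 0"
  unfolding supported_at_def by blast

lemma uniform_support:
  assumes "T \<ge> 0"
  obtains B where "B > 0" "\<And>s. 0 \<le> s \<Longrightarrow> s \<le> T \<Longrightarrow> supported_at B s"
proof -
  obtain B where B: "\<forall>x v t. 0 \<le> t \<and> t \<le> T \<and> f x v t \<noteq> 0 \<longrightarrow> norm x \<le> B \<and> norm v \<le> B"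
    using solution_support[OF assms] by blast
  have "supported_at (max B 1) s" if "0 \<le> s" "s \<le> T" for s
    unfolding supported_at_def
  proof (intro allI impI)
    fix x v :: "real^'d" assume far: "max B 1 < norm x \<or> max B 1 < norm v"
    show "f x v s = 0"
    proof (rule ccontr)
      assume "f x v s \<noteq> 0"
      then have "norm x \<le> B \<and> norm v \<le> B" using B that by blast
      then show False using far by linarith
    qed
  qed
  then show ?thesis using that[of "max B 1"] by simp
qed

lemma box_supported_moment:
  assumes "supported_at B s" "continuous_on UNIV p"
  shows "box_supported B (\<lambda>z. f (fst z) (snd z) s *\<^sub>R p (snd z))"
  unfolding box_supported_def
proof (intro conjI allI impI)
  show "continuous_on UNIV (\<lambda>z. f (fst z) (snd z) s *\<^sub>R p (snd z))"
    by (intro continuous_intros continuous_f continuous_on_compose2[OF assms(2)]) auto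
  show "f (fst (y, v)) (snd (y, v)) s *\<^sub>R p (snd (y, v)) = 0" if "B < norm y \<or> B < norm v" for y v
    using supported_atD[OF assms(1) that] by simp
qed

definition H :: "(real^'d) \<times> (real^'d) \<Rightarrow> real" where
  "H z = norm (snd z) ^ 2 / 2 + \<Phi> (fst z)"

lemma continuous_H: "continuous_on UNIV H"
  unfolding H_def
  by (intro continuous_intros continuous_on_compose2[OF smooth_fun_continuous[OF potential_smooth]]) auto

lemma energy_eq: "energy \<Phi> f t = (\<integral>z. H z * f (fst z) (snd z) t \<partial>lborel)"
  unfolding energy_def H_def ..

lemma energy_nonneg: "energy \<Phi> f s \<ge> 0"
  unfolding energy_eq H_def
  by (intro integral_nonneg_AE AE_I2 mult_nonneg_nonneg solution_nonneg add_nonneg_nonneg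
      potential_nonneg) auto

lemma energy_integrand_vanishing:
  "supported_at B s \<Longrightarrow> norm z > 2 * B \<Longrightarrow> g z * f (fst z) (snd z) s = 0"
  using supported_atD norm_Pair_gt_imp by fastforce

lemma energy_continuous:
  assumes "T \<ge> 0"
  shows "continuous_on {0..T} (\<lambda>s. energy \<Phi> f s)"
proof -
  obtain B where B: "\<And>s. 0 \<le> s \<Longrightarrow> s \<le> T \<Longrightarrow> supported_at B s"
    using uniform_support[OF assms] by blast
  define g where "g = (\<lambda>p::real \<times> ((real^'d) \<times> (real^'d)). H (snd p) * f (fst (snd p)) (snd (snd p)) (fst p))"
  have "continuous_on UNIV (\<lambda>p::real \<times> ((real^'d) \<times> (real^'d)). F (snd p, fst p))"
    by (rule continuous_on_compose2[OF smooth_fun_continuous[OF F_smooth]]) (auto intro!: continuous_intros)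
  moreover have "continuous_on UNIV (\<lambda>p::real \<times> ((real^'d) \<times> (real^'d)). H (snd p))"
    by (rule continuous_on_compose2[OF continuous_H]) (auto intro!: continuous_intros)
  ultimately have "continuous_on UNIV g"
    unfolding g_def by (simp add: F_def case_prod_beta continuous_on_mult)
  then have "continuous_on {0..T} (\<lambda>s. \<integral>z. g (s, z) \<partial>lborel)"
  proof (rule continuous_on_parametric_integral[where B="2*B", OF closed_atLeastAtMost continuous_on_subset])
    show "g (s, z) = 0" if "s \<in> {0..T}" "norm z > 2 * B" for s z
    proof -
      have "H z * f (fst z) (snd z) s = 0"
        by (rule energy_integrand_vanishing) (use B[of s] that in auto)
      then show ?thesis by (simp add: g_def)
    qed
  qed auto
  then show ?thesis unfolding energy_eq g_def by simp
qed

lemma energy_has_derivative: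
  assumes "0 < a"
  shows "((\<lambda>s. energy \<Phi> f s) has_real_derivative (\<integral>z. H z * f_t (fst z) (snd z) a \<partial>lborel)) (at a)"
    and "integrable lborel (\<lambda>z. H z * f_t (fst z) (snd z) a)"
proof -
  obtain B where B: "\<And>s. 0 \<le> s \<Longrightarrow> s \<le> a + 1 \<Longrightarrow> supported_at B s"
    using uniform_support[of "a + 1"] assms by auto
  have "continuous_on UNIV (\<lambda>p::real \<times> ((real^'d) \<times> (real^'d)). f_t (fst (snd p)) (snd (snd p)) (fst p))"
  proof -
    have swap_continuous: "continuous_on UNIV (\<lambda>p::real \<times> ((real^'d) \<times> (real^'d)). (snd p, fst p))"
      by (intro continuous_intros)
    show ?thesis using continuous_on_compose2[OF continuous_f_t_joint swap_continuous] by simp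
  qed
  moreover have "continuous_on UNIV (\<lambda>p::real \<times> ((real^'d) \<times> (real^'d)). H (snd p))"
    by (rule continuous_on_compose2[OF continuous_H]) (auto intro!: continuous_intros)
  ultimately have "continuous_on UNIV (\<lambda>p::real \<times> ((real^'d) \<times> (real^'d)). H (snd p) * f_t (fst (snd p)) (snd (snd p)) (fst p))"
    by (rule continuous_on_mult[rotated])
  then obtain Mb where Mb: "\<And>p. norm p \<le> a + 1 + 2 * B \<Longrightarrow>
      norm (H (snd p) * f_t (fst (snd p)) (snd (snd p)) (fst p)) \<le> Mb"
    using continuous_bounded_on_cball by blast
  define \<delta> where "\<delta> = min a 1"
  have \<delta>: "\<delta> > 0" using assms by (simp add: \<delta>_def)
  have near: "0 \<le> s" "s \<le> a + 1" if "\<bar>s - a\<bar> < \<delta>" for s using that by (auto simp: \<delta>_def)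
  have bound: "\<bar>H z * f_t (fst z) (snd z) s\<bar> \<le> Mb" if "\<bar>s - a\<bar> < \<delta>" "norm z \<le> 2 * B" for s z
    using Mb[of "(s, z)"] norm_Pair_le[of s z] that near[OF that(1)] by simp
  have measurable: "(\<lambda>z. H z * f_t (fst z) (snd z) a) \<in> borel_measurable lborel"
    "(\<lambda>z. H z * f (fst z) (snd z) s) \<in> borel_measurable lborel" for s
    by (simp_all add: borel_measurable_continuous_onI continuous_intros continuous_H continuous_f continuous_f_t)
  have vanish: "H z * f (fst z) (snd z) s = 0" if "\<bar>s - a\<bar> < \<delta>" "norm z > 2 * B" for s z
    by (rule energy_integrand_vanishing[OF B[OF near[OF that(1)]] that(2)])
  have integrable: "integrable lborel (\<lambda>z. H z * f (fst z) (snd z) s)" if "\<bar>s - a\<bar> < \<delta>" for s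
  proof (rule integrable_vanishing_outside_ball[where R="2*B"])
    show "continuous_on UNIV (\<lambda>z. H z * f (fst z) (snd z) s)"
      by (intro continuous_intros continuous_H continuous_f)
  qed (rule vanish[OF that])
  note L = has_real_derivative_integral[where h="\<lambda>s z. H z * f (fst z) (snd z) s"
      and h'="\<lambda>s z. H z * f_t (fst z) (snd z) s" and a=a and K="2*B",
      OF \<delta> DERIV_cmult[OF f_has_derivative_t] measurable(2) measurable(1) integrable vanish bound]
  show "((\<lambda>s. energy \<Phi> f s) has_real_derivative (\<integral>z. H z * f_t (fst z) (snd z) a \<partial>lborel)) (at a)"
    unfolding energy_eq using L(1) .
  show "integrable lborel (\<lambda>z. H z * f_t (fst z) (snd z) a)" using L(2) .
qed

lemma phase_integral_derivative_eq_0: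
  assumes B: "supported_at B s" and c: "continuous_on UNIV c" and D: "continuous_on UNIV D"
    and dG: "\<And>z \<sigma>. ((\<lambda>\<sigma>. H (z + \<sigma> *\<^sub>R w) * c (z + \<sigma> *\<^sub>R w) *
        f (fst (z + \<sigma> *\<^sub>R w)) (snd (z + \<sigma> *\<^sub>R w)) s) has_real_derivative D (z + \<sigma> *\<^sub>R w)) (at \<sigma>)"
  shows "integrable lborel D" "(\<integral>z. D z \<partial>lborel) = 0"
proof -
  have "continuous_on UNIV (\<lambda>z. H z * c z * f (fst z) (snd z) s)"
    by (intro continuous_intros continuous_H c continuous_f)
  moreover have "norm z > 2 * B \<Longrightarrow> H z * c z * f (fst z) (snd z) s = 0" for z
    using energy_integrand_vanishing[OF B, of z "\<lambda>z. H z * c z"] by simp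
  ultimately show "integrable lborel D" "(\<integral>z. D z \<partial>lborel) = 0"
    using integral_directional_derivative_eq_0[OF _ D dG, where K="2*B"] by auto
qed

text \<open>The transport part of H f_t, namely H (- v.grad_x f + grad \<Phi>.grad_v f), is a sum of
  exact x_i- and v_i-derivatives of H v_i f and H \<Phi>_x_i f (the cross terms cancel), so its
  phase-space integral vanishes.\<close>
definition transport_term :: "real \<Rightarrow> (real^'d) \<times> (real^'d) \<Rightarrow> real" where
  "transport_term s z = H z * (- (\<Sum>i\<in>UNIV. snd z $ i * f_x i (fst z) (snd z) s)
                               + (\<Sum>i\<in>UNIV. \<Phi>_x i (fst z) * f_v i (fst z) (snd z) s))"

definition x_flux_derivative :: "real \<Rightarrow> 'd \<Rightarrow> (real^'d) \<times> (real^'d) \<Rightarrow> real" where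
  "x_flux_derivative s i z = \<Phi>_x i (fst z) * snd z $ i * f (fst z) (snd z) s
                             + H z * snd z $ i * f_x i (fst z) (snd z) s"

definition v_flux_derivative :: "real \<Rightarrow> 'd \<Rightarrow> (real^'d) \<times> (real^'d) \<Rightarrow> real" where
  "v_flux_derivative s i z = snd z $ i * \<Phi>_x i (fst z) * f (fst z) (snd z) s
                             + H z * \<Phi>_x i (fst z) * f_v i (fst z) (snd z) s"

lemma x_flux_has_derivative:
  "((\<lambda>\<sigma>. H (z + \<sigma> *\<^sub>R (axis i 1, 0)) * snd (z + \<sigma> *\<^sub>R (axis i 1, 0)) $ i *
      f (fst (z + \<sigma> *\<^sub>R (axis i 1, 0))) (snd (z + \<sigma> *\<^sub>R (axis i 1, 0))) s)
    has_real_derivative x_flux_derivative s i (z + \<sigma> *\<^sub>R (axis i 1, 0))) (at \<sigma>)"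
proof -
  obtain x v where z: "z = (x, v)" by (cases z)
  show ?thesis unfolding z H_def x_flux_derivative_def
    by (simp, auto intro!: derivative_eq_intros \<Phi>_has_derivative_x f_has_derivative_x)
qed

lemma v_flux_has_derivative:
  "((\<lambda>\<sigma>. H (z + \<sigma> *\<^sub>R (0, axis i 1)) * \<Phi>_x i (fst (z + \<sigma> *\<^sub>R (0, axis i 1))) *
      f (fst (z + \<sigma> *\<^sub>R (0, axis i 1))) (snd (z + \<sigma> *\<^sub>R (0, axis i 1))) s)
    has_real_derivative v_flux_derivative s i (z + \<sigma> *\<^sub>R (0, axis i 1))) (at \<sigma>)"
proof -
  obtain x v where z: "z = (x, v)" by (cases z)
  show ?thesis unfolding z H_def v_flux_derivative_def
    by (simp add: norm_add_axis_sq,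
        auto intro!: derivative_eq_intros f_has_derivative_v simp: algebra_simps)
qed

lemma transport_term_eq: "transport_term s z = (\<Sum>i\<in>UNIV. v_flux_derivative s i z - x_flux_derivative s i z)"
  unfolding transport_term_def x_flux_derivative_def v_flux_derivative_def
  by (simp add: sum_subtractf sum_distrib_left algebra_simps)

lemma transport_term_integral_eq_0:
  assumes B: "supported_at B s"
  shows "integrable lborel (transport_term s)" "(\<integral>z. transport_term s z \<partial>lborel) = 0"
proof -
  have cx: "continuous_on UNIV (x_flux_derivative s i)" for i
    unfolding x_flux_derivative_def[abs_def]
    by (intro continuous_intros continuous_H continuous_f continuous_f_x continuous_\<Phi>_x)
  have cv: "continuous_on UNIV (v_flux_derivative s i)" for i
    unfolding v_flux_derivative_def[abs_def]
    by (intro continuous_intros continuous_H continuous_f continuous_f_v continuous_\<Phi>_x)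
  note X = phase_integral_derivative_eq_0[OF B _ cx x_flux_has_derivative]
  note V = phase_integral_derivative_eq_0[OF B continuous_\<Phi>_x cv v_flux_has_derivative]
  have cs: "continuous_on UNIV (\<lambda>z::(real^'d) \<times> (real^'d). snd z $ i)" for i
    by (intro continuous_intros)
  have I: "integrable lborel (\<lambda>z. v_flux_derivative s i z - x_flux_derivative s i z)" for i
    using X[OF cs] V by auto
  show "integrable lborel (transport_term s)"
    unfolding transport_term_eq[abs_def] by (intro Bochner_Integration.integrable_sum I)
  have "(\<integral>z. transport_term s z \<partial>lborel) =
      (\<Sum>i\<in>UNIV. \<integral>z. v_flux_derivative s i z - x_flux_derivative s i z \<partial>lborel)"
    unfolding transport_term_eq by (rule Bochner_Integration.integral_sum) (rule I)
  also have "\<dots> = 0" using X[OF cs] V by simp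
  finally show "(\<integral>z. transport_term s z \<partial>lborel) = 0" .
qed

text \<open>The alignment part of H f_t is - H div_v (f (u~ - v)).  On each velocity fibre,
  integrating by parts in v_i moves the derivative onto H, whose v-gradient is v; this
  leaves (v.u~ - |v|^2) f.\<close>
definition alignment_term :: "real \<Rightarrow> (real^'d) \<times> (real^'d) \<Rightarrow> real" where
  "alignment_term s z = H z * (- (\<Sum>i\<in>UNIV. f_v i (fst z) (snd z) s *
       (u_tilde \<phi> f (fst z) s $ i - snd z $ i) - f (fst z) (snd z) s))"

definition velocity_flux_derivative :: "real \<Rightarrow> 'd \<Rightarrow> real^'d \<Rightarrow> real^'d \<Rightarrow> real^'d \<Rightarrow> real" where
  "velocity_flux_derivative s i c x v = v $ i * (c $ i - v $ i) * f x v s - H (x, v) * f x v s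
                                       + H (x, v) * (c $ i - v $ i) * f_v i x v s"

lemma velocity_flux_has_derivative:
  "((\<lambda>\<sigma>. H (x, v + \<sigma> *\<^sub>R axis i 1) * (c $ i - (v + \<sigma> *\<^sub>R axis i 1) $ i) * f x (v + \<sigma> *\<^sub>R axis i 1) s)
    has_real_derivative velocity_flux_derivative s i c x (v + \<sigma> *\<^sub>R axis i 1)) (at \<sigma>)"
  unfolding velocity_flux_derivative_def H_def
  by (simp add: norm_add_axis_sq,
      auto intro!: derivative_eq_intros f_has_derivative_v simp: field_simps power2_eq_square)

lemma velocity_flux_integral_eq_0:
  assumes B: "supported_at B s"
  shows "integrable lborel (velocity_flux_derivative s i c x)"
    "(\<integral>v. velocity_flux_derivative s i c x v \<partial>lborel) = 0"
proof -
  have cf: "continuous_on UNIV (\<lambda>v. f x v s)"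
    using continuous_velocity_slice[OF continuous_f, where x=x] by simp
  have cfv: "continuous_on UNIV (\<lambda>v. f_v i x v s)"
    using continuous_velocity_slice[OF continuous_f_v, where x=x] by simp
  have cH: "continuous_on UNIV (\<lambda>v. H (x, v))" by (rule continuous_velocity_slice[OF continuous_H])
  have cG: "continuous_on UNIV (\<lambda>v. H (x, v) * (c $ i - v $ i) * f x v s)"
    by (intro continuous_intros cH cf)
  have cD: "continuous_on UNIV (velocity_flux_derivative s i c x)"
    unfolding velocity_flux_derivative_def[abs_def] by (intro continuous_intros cH cf cfv)
  have sG: "H (x, v) * (c $ i - v $ i) * f x v s = 0" if "norm v > B" for v
    using supported_atD[OF B, of x v] that by simp
  show "integrable lborel (velocity_flux_derivative s i c x)"
    "(\<integral>v. velocity_flux_derivative s i c x v \<partial>lborel) = 0"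
    using integral_directional_derivative_eq_0[OF cG cD velocity_flux_has_derivative sG] by auto
qed

lemma velocity_integral_alignment_term:
  assumes B: "supported_at B s"
  shows "(\<integral>v. alignment_term s (x, v) \<partial>lborel) =
           (\<integral>v. (v \<bullet> u_tilde \<phi> f x s - norm v ^ 2) * f x v s \<partial>lborel)"
proof -
  let ?c = "u_tilde \<phi> f x s"
  have cf: "continuous_on UNIV (\<lambda>v. f x v s)"
    using continuous_velocity_slice[OF continuous_f, where x=x] by simp
  have Ia: "integrable lborel (\<lambda>v. v $ i * (?c $ i - v $ i) * f x v s)" for i
    by (rule integrable_vanishing_outside_ball[where R=B])
       (intro continuous_intros cf, simp add: supported_atD[OF B])
  note V = velocity_flux_integral_eq_0[OF B, of i ?c x for i]
  have eq: "alignment_term s (x, v) =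
      (\<Sum>i\<in>UNIV. v $ i * (?c $ i - v $ i) * f x v s - velocity_flux_derivative s i ?c x v)" for v
    unfolding alignment_term_def velocity_flux_derivative_def
    by (simp add: sum_subtractf sum_distrib_left algebra_simps)
  have "(\<integral>v. alignment_term s (x, v) \<partial>lborel) =
      (\<Sum>i\<in>UNIV. \<integral>v. v $ i * (?c $ i - v $ i) * f x v s - velocity_flux_derivative s i ?c x v \<partial>lborel)"
    unfolding eq by (rule Bochner_Integration.integral_sum) (use Ia V in auto)
  also have "\<dots> = (\<Sum>i\<in>UNIV. \<integral>v. v $ i * (?c $ i - v $ i) * f x v s \<partial>lborel)"
    using Ia V by simp
  also have "\<dots> = (\<integral>v. (\<Sum>i\<in>UNIV. v $ i * (?c $ i - v $ i) * f x v s) \<partial>lborel)"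
    by (rule Bochner_Integration.integral_sum[symmetric]) (rule Ia)
  also have "\<dots> = (\<integral>v. (v \<bullet> ?c - norm v ^ 2) * f x v s \<partial>lborel)"
  proof -
    have "(\<Sum>i\<in>UNIV. v $ i * (?c $ i - v $ i)) = v \<bullet> ?c - norm v ^ 2" for v :: "real^'d"
      by (simp add: power2_norm_eq_inner inner_vec_def sum_subtractf algebra_simps)
    then show ?thesis by (simp add: sum_distrib_right[symmetric])
  qed
  finally show ?thesis .
qed

lemma H_f_t_split: "0 \<le> s \<Longrightarrow> H z * f_t (fst z) (snd z) s = transport_term s z + alignment_term s z"
  unfolding transport_term_def alignment_term_def
  by (simp only: kinetic_eq_coordinates) (simp add: algebra_simps)

definition alignment_power :: "real \<Rightarrow> real^'d \<Rightarrow> real" where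
  "alignment_power s x = (\<integral>v. (v \<bullet> u_tilde \<phi> f x s - norm v ^ 2) * f x v s \<partial>lborel)"

lemma energy_derivative:
  assumes "0 < s"
  shows "((\<lambda>s. energy \<Phi> f s) has_real_derivative (\<integral>x. alignment_power s x \<partial>lborel)) (at s)"
    and "integrable lborel (alignment_power s)"
proof -
  obtain B where B: "supported_at B s"
    using uniform_support[of s] assms by (metis less_imp_le order_refl)
  note E = energy_has_derivative[OF assms]
  note T = transport_term_integral_eq_0[OF B]
  have split: "(\<lambda>z. H z * f_t (fst z) (snd z) s) = (\<lambda>z. transport_term s z + alignment_term s z)"
    using H_f_t_split assms by auto
  have IA: "integrable lborel (alignment_term s)"
  proof -
    have "integrable lborel (\<lambda>z. H z * f_t (fst z) (snd z) s - transport_term s z)"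
      using E(2) T(1) by auto
    also have "(\<lambda>z. H z * f_t (fst z) (snd z) s - transport_term s z) = alignment_term s"
      using H_f_t_split[of s] assms by (auto simp: fun_eq_iff)
    finally show ?thesis .
  qed
  have "(\<integral>z. H z * f_t (fst z) (snd z) s \<partial>lborel) = (\<integral>z. alignment_term s z \<partial>lborel)"
    unfolding split using T IA by simp
  also have "\<dots> = (\<integral>x. \<integral>v. alignment_term s (x, v) \<partial>lborel \<partial>lborel)"
    using lborel_pair.integral_fst'[of "alignment_term s"] IA by (simp add: lborel_prod)
  also have "\<dots> = (\<integral>x. alignment_power s x \<partial>lborel)"
    unfolding alignment_power_def using velocity_integral_alignment_term[OF B] by simp
  finally show "((\<lambda>s. energy \<Phi> f s) has_real_derivative (\<integral>x. alignment_power s x \<partial>lborel)) (at s)"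
    using E(1) by simp
  have "integrable lborel (\<lambda>x. \<integral>v. alignment_term s (x, v) \<partial>lborel)"
    using lborel_pair.integrable_fst'[of "alignment_term s"] IA by (simp add: lborel_prod)
  then show "integrable lborel (alignment_power s)"
    unfolding alignment_power_def[abs_def] using velocity_integral_alignment_term[OF B] by simp
qed

text \<open>Density, momentum and energy of the smoothed
  distribution are moments of this kind, and moments are linear and monotone in p.\<close>
definition weighted_moment :: "real \<Rightarrow> real^'d \<Rightarrow> (real^'d \<Rightarrow> real) \<Rightarrow> real" where
  "weighted_moment s x p = (\<integral>y. \<phi> (x - y) * (\<integral>v. f y v s * p v \<partial>lborel) \<partial>lborel)"

lemma moment_box_supported:
  "supported_at B s \<Longrightarrow> continuous_on UNIV p \<Longrightarrow> box_supported B (\<lambda>z. f (fst z) (snd z) s * p (snd z))"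
  using box_supported_moment[of B s p] by simp

lemma velocity_moment_integrable:
  "supported_at B s \<Longrightarrow> continuous_on UNIV p \<Longrightarrow> integrable lborel (\<lambda>v. f y v s * p v)"
  using box_supported_integrable_slice[OF moment_box_supported, of B s p y] by simp

lemma weighted_moment_integrable:
  "supported_at B s \<Longrightarrow> continuous_on UNIV p \<Longrightarrow>
     integrable lborel (\<lambda>y. \<phi> (x - y) * (\<integral>v. f y v s * p v \<partial>lborel))"
  using box_supported_weighted_slice_integrable[OF moment_box_supported continuous_kernel_shift,
      of B s p x] by simp

lemma velocity_moment_supported:
  assumes B: "supported_at B s" and p: "continuous_on UNIV p" "\<And>v. 0 \<le> p v"
  shows "supported_density B (\<lambda>y. \<integral>v. f y v s * p v \<partial>lborel)"
  unfolding supported_density_def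
proof (intro conjI allI impI)
  show "continuous_on UNIV (\<lambda>y. \<integral>v. f y v s * p v \<partial>lborel)"
    using box_supported_continuous_slice_integral[OF moment_box_supported[OF B p(1)]] by simp
  show "0 \<le> (\<integral>v. f y v s * p v \<partial>lborel)" for y
    by (intro integral_nonneg_AE AE_I2 mult_nonneg_nonneg solution_nonneg p(2))
  show "(\<integral>v. f y v s * p v \<partial>lborel) = 0" if "norm y > B" for y
    using box_supported_slice_integral_vanishing[OF moment_box_supported[OF B p(1)] that] by simp
qed

lemma weighted_moment_add:
  assumes B: "supported_at B s" and "continuous_on UNIV p" "continuous_on UNIV q"
  shows "weighted_moment s x (\<lambda>v. p v + q v) = weighted_moment s x p + weighted_moment s x q"
proof -
  have "(\<integral>v. f y v s * (p v + q v) \<partial>lborel) = (\<integral>v. f y v s * p v \<partial>lborel) + (\<integral>v. f y v s * q v \<partial>lborel)"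
    for y using velocity_moment_integrable[OF B assms(2)] velocity_moment_integrable[OF B assms(3)]
    by (simp add: distrib_left)
  then show ?thesis
    using weighted_moment_integrable[OF B assms(2)] weighted_moment_integrable[OF B assms(3)]
    by (simp add: weighted_moment_def distrib_left)
qed

lemma weighted_moment_scale: "weighted_moment s x (\<lambda>v. c * p v) = c * weighted_moment s x p"
  by (simp add: weighted_moment_def mult.left_commute)

lemma weighted_moment_sum:
  assumes B: "supported_at B s" and p: "\<And>i. continuous_on UNIV (p i)"
  shows "weighted_moment s x (\<lambda>v. \<Sum>i\<in>UNIV. p i v) = (\<Sum>i\<in>(UNIV::'d set). weighted_moment s x (p i))"
proof -
  have "(\<integral>v. f y v s * (\<Sum>i\<in>UNIV. p i v) \<partial>lborel) = (\<Sum>i\<in>(UNIV::'d set). \<integral>v. f y v s * p i v \<partial>lborel)"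
    for y using velocity_moment_integrable[OF B p]
    by (simp add: sum_distrib_left Bochner_Integration.integral_sum)
  then show ?thesis
    using weighted_moment_integrable[OF B p]
    by (simp add: weighted_moment_def sum_distrib_left Bochner_Integration.integral_sum)
qed

lemma weighted_moment_nonneg: "(\<And>v. 0 \<le> p v) \<Longrightarrow> 0 \<le> weighted_moment s x p"
  unfolding weighted_moment_def
  by (intro integral_nonneg_AE AE_I2 mult_nonneg_nonneg kernel_nonneg solution_nonneg) auto

definition kinetic_density :: "real \<Rightarrow> real^'d \<Rightarrow> real" where
  "kinetic_density s y = (\<integral>v. f y v s * norm v ^ 2 \<partial>lborel)"

lemma rho_supported: "supported_at B s \<Longrightarrow> supported_density B (\<lambda>y. rho f y s)"
  using velocity_moment_supported[of B s "\<lambda>v. 1"] by (simp add: rho_def)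

lemma kinetic_density_supported: "supported_at B s \<Longrightarrow> supported_density B (kinetic_density s)"
  using velocity_moment_supported[of B s "\<lambda>v. norm v ^ 2"]
  by (simp add: kinetic_density_def[abs_def] continuous_intros)

lemma rho_tilde_eq_conv: "rho_tilde \<phi> f x s = conv (\<lambda>y. rho f y s) x"
  by (simp add: rho_tilde_def conv_def)

lemma rho_tilde_moment: "rho_tilde \<phi> f x s = weighted_moment s x (\<lambda>v. 1)"
  by (simp add: rho_tilde_def rho_def weighted_moment_def)

lemma momentum_moment:
  assumes B: "supported_at B s"
  shows "(\<integral>y. \<phi> (x - y) *\<^sub>R jflux f y s \<partial>lborel) $ i = weighted_moment s x (\<lambda>v. v $ i)"
proof -
  have box: "box_supported B (\<lambda>z. f (fst z) (snd z) s *\<^sub>R snd z)"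
    using box_supported_moment[OF B, of "\<lambda>v. v"] by simp
  have "jflux f y s $ i = (\<integral>v. f y v s * v $ i \<partial>lborel)" for y
  proof -
    have "integrable lborel (\<lambda>v. f y v s *\<^sub>R v)"
      using box_supported_integrable_slice[OF box, of y] by simp
    then show ?thesis
      unfolding jflux_def by (subst integral_bounded_linear[OF bounded_linear_vec_nth, symmetric]) auto
  qed
  moreover have "(\<integral>y. \<phi> (x - y) *\<^sub>R jflux f y s \<partial>lborel) $ i = (\<integral>y. (\<phi> (x - y) *\<^sub>R jflux f y s) $ i \<partial>lborel)"
  proof -
    have "integrable lborel (\<lambda>y. \<phi> (x - y) *\<^sub>R jflux f y s)"
      using box_supported_weighted_slice_integrable[OF box continuous_kernel_shift] by (simp add: jflux_def)
    then show ?thesis by (subst integral_bounded_linear[OF bounded_linear_vec_nth, symmetric]) auto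
  qed
  ultimately show ?thesis by (simp add: weighted_moment_def)
qed

lemma smoothed_kinetic_density_moment:
  assumes B: "supported_at B s"
  shows "conv (kinetic_density s) x = (\<Sum>i\<in>UNIV. weighted_moment s x (\<lambda>v. (v $ i) ^ 2))"
proof -
  have squares: "(\<lambda>v::real^'d. norm v ^ 2) = (\<lambda>v. \<Sum>i\<in>UNIV. (v $ i) ^ 2)"
    unfolding power2_norm_eq_inner inner_vec_def by (simp add: power2_eq_square)
  have "conv (kinetic_density s) x = weighted_moment s x (\<lambda>v. norm v ^ 2)"
    by (simp add: conv_def kinetic_density_def weighted_moment_def)
  also have "\<dots> = weighted_moment s x (\<lambda>v. \<Sum>i\<in>UNIV. (v $ i) ^ 2)"
    by (simp only: squares)
  also have "\<dots> = (\<Sum>i\<in>UNIV. weighted_moment s x (\<lambda>v. (v $ i) ^ 2))"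
    by (rule weighted_moment_sum[OF B]) (intro continuous_intros)
  finally show ?thesis .
qed

text \<open>Cauchy-Schwarz for the smoothed momentum: |\<phi> * j|^2 \<le> (\<phi> * rho) (\<phi> * e).
  For each component i, the moment of (v_i - l)^2 is a nonnegative quadratic in l.\<close>
lemma momentum_cauchy_schwarz:
  assumes B: "supported_at B s" and pos: "rho_tilde \<phi> f x s > 0"
  shows "norm (\<integral>y. \<phi> (x - y) *\<^sub>R jflux f y s \<partial>lborel) ^ 2 \<le>
           rho_tilde \<phi> f x s * conv (kinetic_density s) x"
proof -
  let ?m = "weighted_moment s x"
  let ?a = "\<integral>y. \<phi> (x - y) *\<^sub>R jflux f y s \<partial>lborel"
  have cont: "continuous_on UNIV (\<lambda>v::real^'d. v $ i)" for i
    by (intro continuous_intros)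
  have quadratic: "0 \<le> ?m (\<lambda>v. (v $ i) ^ 2) - 2 * l * ?m (\<lambda>v. v $ i) + l^2 * ?m (\<lambda>v. 1)" for i l
  proof -
    have "(\<lambda>v. (v $ i - l) ^ 2) = (\<lambda>v. (v $ i) ^ 2 + (- 2 * l * v $ i + l ^ 2 * 1))"
      by (simp add: fun_eq_iff power2_eq_square algebra_simps)
    then have "0 \<le> ?m (\<lambda>v. (v $ i) ^ 2 + (- 2 * l * v $ i + l ^ 2 * 1))"
      using weighted_moment_nonneg[of "\<lambda>v. (v $ i - l) ^ 2" s x] by simp
    also have "\<dots> = ?m (\<lambda>v. (v $ i) ^ 2) - 2 * l * ?m (\<lambda>v. v $ i) + l^2 * ?m (\<lambda>v. 1)"
      using weighted_moment_add[OF B, of "\<lambda>v. (v $ i) ^ 2" "\<lambda>v. - 2 * l * v $ i + l ^ 2 * 1"]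
        weighted_moment_add[OF B, of "\<lambda>v. - 2 * l * v $ i" "\<lambda>v. l ^ 2 * 1"]
        weighted_moment_scale[of s x "- 2 * l" "\<lambda>v. v $ i"] weighted_moment_scale[of s x "l ^ 2" "\<lambda>v. 1"]
      by (simp add: continuous_intros)
    finally show ?thesis .
  qed
  have "norm ?a ^ 2 = (\<Sum>i\<in>UNIV. (?a $ i) ^ 2)"
    unfolding power2_norm_eq_inner inner_vec_def by (simp add: power2_eq_square)
  also have "\<dots> \<le> (\<Sum>i\<in>UNIV. rho_tilde \<phi> f x s * ?m (\<lambda>v. (v $ i) ^ 2))"
    unfolding momentum_moment[OF B] rho_tilde_moment
    by (intro sum_mono square_le_of_quadratic_nonneg[OF quadratic]) (use pos rho_tilde_moment in simp)
  also have "\<dots> = rho_tilde \<phi> f x s * conv (kinetic_density s) x"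
    by (simp add: smoothed_kinetic_density_moment[OF B] sum_distrib_left)
  finally show ?thesis .
qed

definition alignment_energy :: "real \<Rightarrow> real^'d \<Rightarrow> real" where
  "alignment_energy s x = rho f x s * norm (u_tilde \<phi> f x s) ^ 2"

lemma alignment_energy_le:
  assumes B: "supported_at B s"
  shows "alignment_energy s x \<le> density_ratio (\<lambda>y. rho f y s) x * conv (kinetic_density s) x"
proof (cases "rho_tilde \<phi> f x s > 0")
  case True
  let ?a = "\<integral>y. \<phi> (x - y) *\<^sub>R jflux f y s \<partial>lborel"
  let ?m = "rho_tilde \<phi> f x s"
  have "norm (u_tilde \<phi> f x s) ^ 2 = norm ?a ^ 2 / ?m ^ 2"
    using True by (simp add: u_tilde_def power_divide)
  also have "\<dots> \<le> ?m * conv (kinetic_density s) x / ?m ^ 2"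
    using momentum_cauchy_schwarz[OF B True] True by (intro divide_right_mono) auto
  also have "\<dots> = conv (kinetic_density s) x / ?m" using True by (simp add: power2_eq_square)
  finally have "alignment_energy s x \<le> rho f x s * (conv (kinetic_density s) x / ?m)"
    unfolding alignment_energy_def
    using rho_supported[OF B] by (intro mult_left_mono) (auto simp: supported_density_def)
  then show ?thesis using True by (simp add: density_ratio_def rho_tilde_eq_conv)
next
  case False
  then have "rho_tilde \<phi> f x s = 0"
    using conv_nonneg[of "\<lambda>y. rho f y s" x] rho_supported[OF B]
    by (auto simp: rho_tilde_eq_conv supported_density_def)
  then show ?thesis
    by (simp add: alignment_energy_def u_tilde_def density_ratio_def rho_tilde_eq_conv)
qed

lemma measurable_alignment_energy:
  assumes B: "supported_at B s"
  shows "alignment_energy s \<in> borel_measurable lborel"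
proof -
  have rho: "supported_density B (\<lambda>y. rho f y s)" by (rule rho_supported[OF B])
  have box: "box_supported B (\<lambda>z. f (fst z) (snd z) s *\<^sub>R snd z)"
    using box_supported_moment[OF B, of "\<lambda>v. v"] by simp
  have cj: "continuous_on UNIV (\<lambda>y. jflux f y s)"
    using box_supported_continuous_slice_integral[OF box] by (simp add: jflux_def)
  have "continuous_on UNIV (\<lambda>x. \<integral>y. \<phi> (x - y) *\<^sub>R jflux f y s \<partial>lborel)"
    by (rule continuous_convolution[OF cj])
       (use box_supported_slice_integral_vanishing[OF box] in \<open>simp add: jflux_def\<close>)
  then have [measurable]: "(\<lambda>x. \<integral>y. \<phi> (x - y) *\<^sub>R jflux f y s \<partial>lborel) \<in> borel_measurable lborel"
    by (simp add: borel_measurable_continuous_onI)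
  have [measurable]: "(\<lambda>x. rho f x s) \<in> borel_measurable lborel"
    "(\<lambda>x. rho_tilde \<phi> f x s) \<in> borel_measurable lborel"
    using rho continuous_conv[of "\<lambda>y. rho f y s" B]
    by (auto simp: supported_density_def rho_tilde_eq_conv[abs_def] borel_measurable_continuous_onI)
  show ?thesis unfolding alignment_energy_def[abs_def] u_tilde_def by measurable
qed

lemma alignment_energy_integral_le:
  assumes B: "supported_at B s"
  shows "integrable lborel (alignment_energy s)"
    and "(\<integral>x. alignment_energy s x \<partial>lborel) \<le> covering_constant * (\<integral>y. kinetic_density s y \<partial>lborel)"
proof -
  have rho: "supported_density B (\<lambda>y. rho f y s)" by (rule rho_supported[OF B])
  have e: "supported_density B (kinetic_density s)" by (rule kinetic_density_supported[OF B])
  have nonneg: "0 \<le> alignment_energy s x" for x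
    using rho by (auto simp: alignment_energy_def supported_density_def)
  have le: "(\<integral>\<^sup>+x. ennreal (alignment_energy s x) \<partial>lborel) \<le>
      ennreal (covering_constant * (\<integral>y. kinetic_density s y \<partial>lborel))"
    by (rule order_trans[OF nn_integral_mono covering_estimate[OF rho e]])
       (simp add: ennreal_leI alignment_energy_le[OF B])
  have [measurable]: "alignment_energy s \<in> borel_measurable lborel"
    by (rule measurable_alignment_energy[OF B])
  show int: "integrable lborel (alignment_energy s)"
    by (rule integrableI_nonneg) (use le nonneg in \<open>auto simp: less_top[symmetric] top_unique\<close>)
  have "0 \<le> covering_constant * (\<integral>y. kinetic_density s y \<partial>lborel)"
    using covering_constant_nonneg e
    by (auto simp: supported_density_def intro!: mult_nonneg_nonneg integral_nonneg_AE)
  moreover have "ennreal (\<integral>x. alignment_energy s x \<partial>lborel) \<le>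
      ennreal (covering_constant * (\<integral>y. kinetic_density s y \<partial>lborel))"
    using le by (subst nn_integral_eq_integral[OF int, symmetric]) (auto simp: nonneg)
  ultimately show "(\<integral>x. alignment_energy s x \<partial>lborel) \<le> covering_constant * (\<integral>y. kinetic_density s y \<partial>lborel)"
    by (simp add: ennreal_le_iff)
qed

text \<open>Pointwise in x, by v.u~ \<le> (|v|^2 + |u~|^2)/2:  \<integral> (v.u~ - |v|^2) f dv \<le> (rho |u~|^2 - e)/2.\<close>
lemma alignment_power_le:
  assumes B: "supported_at B s"
  shows "alignment_power s x \<le> alignment_energy s x / 2 - kinetic_density s x / 2"
proof -
  let ?U = "u_tilde \<phi> f x s"
  have i1: "integrable lborel (\<lambda>v. f x v s * 1)" and i2: "integrable lborel (\<lambda>v. f x v s * norm v ^ 2)"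
    by (intro velocity_moment_integrable[OF B] continuous_intros)+
  have i3: "integrable lborel (\<lambda>v. (v \<bullet> ?U - norm v ^ 2) * f x v s)"
    using velocity_moment_integrable[OF B, of "\<lambda>v. v \<bullet> ?U - norm v ^ 2" x]
    by (simp add: continuous_intros mult.commute)
  have "alignment_power s x \<le> (\<integral>v. (norm ?U ^ 2 / 2) * (f x v s * 1) - (1/2) * (f x v s * norm v ^ 2) \<partial>lborel)"
    unfolding alignment_power_def
  proof (rule integral_mono[OF i3])
    show "integrable lborel (\<lambda>v. (norm ?U ^ 2 / 2) * (f x v s * 1) - (1/2) * (f x v s * norm v ^ 2))"
      using i1 i2 by auto
    fix v :: "real^'d"
    have "(v \<bullet> ?U - norm v ^ 2) * f x v s \<le> (norm ?U ^ 2 / 2 - norm v ^ 2 / 2) * f x v s"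
      using inner_le_half_sum_squares[of v ?U] solution_nonneg[of x v s] by (intro mult_right_mono) auto
    then show "(v \<bullet> ?U - norm v ^ 2) * f x v s \<le> (norm ?U ^ 2 / 2) * (f x v s * 1) - (1/2) * (f x v s * norm v ^ 2)"
      by (simp add: algebra_simps)
  qed
  also have "\<dots> = alignment_energy s x / 2 - kinetic_density s x / 2"
    using i1 i2 by (simp add: alignment_energy_def kinetic_density_def rho_def algebra_simps)
  finally show ?thesis .
qed

text \<open>The kinetic part of the energy: \<integral> e \<le> 2 E, since \<Phi> \<ge> 0.\<close>
lemma kinetic_density_integral_le:
  assumes B: "supported_at B s"
  shows "integrable lborel (kinetic_density s)"
    and "(\<integral>y. kinetic_density s y \<partial>lborel) \<le> 2 * energy \<Phi> f s"
proof -
  have box: "box_supported B (\<lambda>z. f (fst z) (snd z) s * norm (snd z) ^ 2)"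
    by (rule moment_box_supported[OF B]) (intro continuous_intros)
  show "integrable lborel (kinetic_density s)"
    using box_supported_weighted_slice_integrable[OF box continuous_on_const, of 1]
    by (simp add: kinetic_density_def[abs_def])
  have "(\<integral>y. kinetic_density s y \<partial>lborel) = (\<integral>z. f (fst z) (snd z) s * norm (snd z) ^ 2 \<partial>lborel)"
    using box_supported_Fubini[OF box] by (simp add: kinetic_density_def)
  also have "\<dots> \<le> (\<integral>z. 2 * (H z * f (fst z) (snd z) s) \<partial>lborel)"
  proof (rule integral_mono)
    show "integrable lborel (\<lambda>z. f (fst z) (snd z) s * norm (snd z) ^ 2)"
      by (rule box_supported_integrable[OF box])
    show "integrable lborel (\<lambda>z. 2 * (H z * f (fst z) (snd z) s))"
    proof (rule integrable_vanishing_outside_ball[where R="2*B"])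
      show "continuous_on UNIV (\<lambda>z. 2 * (H z * f (fst z) (snd z) s))"
        by (intro continuous_intros continuous_H continuous_f)
    qed (simp add: energy_integrand_vanishing[OF B])
    fix z :: "(real^'d) \<times> (real^'d)"
    show "f (fst z) (snd z) s * norm (snd z) ^ 2 \<le> 2 * (H z * f (fst z) (snd z) s)"
      unfolding H_def using potential_nonneg[of "fst z"] solution_nonneg[of "fst z" "snd z" s]
      by (simp add: algebra_simps)
  qed
  also have "\<dots> = 2 * energy \<Phi> f s" unfolding energy_eq by simp
  finally show "(\<integral>y. kinetic_density s y \<partial>lborel) \<le> 2 * energy \<Phi> f s" .
qed

lemma energy_derivative_le:
  assumes "0 < s"
  shows "(\<integral>x. alignment_power s x \<partial>lborel) \<le> covering_constant * energy \<Phi> f s"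
proof -
  obtain B where B: "supported_at B s"
    using uniform_support[of s] assms by (metis less_imp_le order_refl)
  note P = alignment_energy_integral_le[OF B] and K = kinetic_density_integral_le[OF B]
  have e_nonneg: "0 \<le> (\<integral>y. kinetic_density s y \<partial>lborel)"
    using kinetic_density_supported[OF B] by (auto simp: supported_density_def intro!: integral_nonneg_AE)
  have "(\<integral>x. alignment_power s x \<partial>lborel) \<le>
      (\<integral>x. alignment_energy s x / 2 - kinetic_density s x / 2 \<partial>lborel)"
    by (rule integral_mono[OF energy_derivative(2)[OF assms]])
       (use P(1) K(1) alignment_power_le[OF B] in auto)
  also have "\<dots> = (\<integral>x. alignment_energy s x \<partial>lborel) / 2 - (\<integral>x. kinetic_density s x \<partial>lborel) / 2"
    using P(1) K(1) by simp
  also have "\<dots> \<le> covering_constant * (\<integral>y. kinetic_density s y \<partial>lborel) / 2"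
    using P(2) e_nonneg by simp
  also have "\<dots> \<le> covering_constant * energy \<Phi> f s"
    using mult_left_mono[OF K(2) covering_constant_nonneg] by simp
  finally show ?thesis .
qed

lemma energy_growth:
  assumes K: "covering_constant \<le> K" and t: "t \<ge> 0"
  shows "energy \<Phi> f t \<le> energy \<Phi> f 0 * exp (K * t)"
proof (rule gronwall_deriv[OF t energy_continuous[OF t]])
  fix s :: real assume s: "0 < s" "s < t"
  have "(\<integral>x. alignment_power s x \<partial>lborel) \<le> K * energy \<Phi> f s"
    using energy_derivative_le[OF s(1)] mult_right_mono[OF K energy_nonneg[of s]] by linarith
  then show "\<exists>D. ((\<lambda>s. energy \<Phi> f s) has_real_derivative D) (at s) \<and> D \<le> K * energy \<Phi> f s"
    using energy_derivative(1)[OF s(1)] by blast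
qed

end

theorem mainTheorem16:
  "\<exists>K>0. \<forall>(\<phi> :: real^'d \<Rightarrow> real) r R.
     smooth_fun \<phi> \<and> (\<forall>x. \<phi> x \<ge> 0) \<and> r > 0 \<and> R > 0 \<and>
     (\<forall>x. norm x \<le> r \<longrightarrow> \<phi> x > 0) \<and> (\<forall>x. norm x \<ge> R \<longrightarrow> \<phi> x = 0) \<longrightarrow>
     (\<forall>(\<Phi> :: real^'d \<Rightarrow> real) (f :: real^'d \<Rightarrow> real^'d \<Rightarrow> real \<Rightarrow> real).
        smooth_fun \<Phi> \<and> filterlim \<Phi> at_top at_infinity \<and> (\<forall>x. \<Phi> x \<ge> 0) \<and>
        smooth_fun (\<lambda>((x, v), t). f x v t) \<and>
        (\<forall>x v t. f x v t \<ge> 0) \<and>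
        (\<forall>T\<ge>0. \<exists>B. \<forall>x v t. 0 \<le> t \<and> t \<le> T \<and> f x v t \<noteq> 0 \<longrightarrow> norm x \<le> B \<and> norm v \<le> B) \<and>
        kinetic_eq \<phi> \<Phi> f
        \<longrightarrow>
        (\<forall>t\<ge>0. energy \<Phi> f t \<le>
           energy \<Phi> f 0 *
             exp (K * (Sup (\<phi> ` ball 0 R) / Inf (\<phi> ` ball 0 r)) * (R / r) ^ CARD('d) * t)))"
proof (rule exI[of _ "3 ^ CARD('d)"], intro conjI allI impI)
  fix \<phi> \<Phi> :: "real^'d \<Rightarrow> real" and r R t :: real and f :: "real^'d \<Rightarrow> real^'d \<Rightarrow> real \<Rightarrow> real"
  assume kernel: "smooth_fun \<phi> \<and> (\<forall>x. \<phi> x \<ge> 0) \<and> r > 0 \<and> R > 0 \<and>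
      (\<forall>x. norm x \<le> r \<longrightarrow> \<phi> x > 0) \<and> (\<forall>x. norm x \<ge> R \<longrightarrow> \<phi> x = 0)"
    and solution: "smooth_fun \<Phi> \<and> filterlim \<Phi> at_top at_infinity \<and> (\<forall>x. \<Phi> x \<ge> 0) \<and>
      smooth_fun (\<lambda>((x, v), t). f x v t) \<and> (\<forall>x v t. f x v t \<ge> 0) \<and>
      (\<forall>T\<ge>0. \<exists>B. \<forall>x v t. 0 \<le> t \<and> t \<le> T \<and> f x v t \<noteq> 0 \<longrightarrow> norm x \<le> B \<and> norm v \<le> B) \<and>
      kinetic_eq \<phi> \<Phi> f"
    and t: "0 \<le> t"
  interpret kinetic_solution \<phi> r R \<Phi> f
    by unfold_locales (use kernel solution smooth_fun_continuous in auto)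
  show "energy \<Phi> f t \<le> energy \<Phi> f 0 *
      exp (3 ^ CARD('d) * (Sup (\<phi> ` ball 0 R) / Inf (\<phi> ` ball 0 r)) * (R / r) ^ CARD('d) * t)"
    using energy_growth[OF covering_constant_le t] by (simp add: sup_kernel_def inf_kernel_def)
qed simp

end
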